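(* (i) Suppose that the $\Psi_i$ satisfy (C1) and (C3), and there is some nonzero $\rho\in L$ for which (C2) holds. Then the $\lambda_t$ and the $\Psi_i$ form an $A$-scaffold of tolerance $\mathfrak{T}=1$ on $L$, with shift parameters $b_1,\ldots,b_n$. Moreover $\mathfrak{a}(v_L(\rho))=p^n-1$. (ii) If, furthermore, (C4) holds and $A$ is commutative, then the $\lambda_t$ may be chosen so that the $A$-scaffold has tolerance $\infty$. (iii) Conversely, if the $\lambda_t$ and the $\Psi_i$ form an $A$-scaffold of some tolerance $\mathfrak{T}\geq 1$, then (C1) and (C3) hold, and (C2) holds for any $\rho\in L$ with $\mathfrak{a}(v_L(\rho))=p^n-1$.
   Context: Let $K$ be a local field whose residue field has characteristic $p>0$, let $L/K$ be a totally ramified extension of degree $p^n$, with normalized valuations $v_K,v_L$ ($v_L(L^\times)=\mathbb{Z}$), and let $A$ be a $K$-algebra of dimension $p^n$ acting $K$-linearly on $L$. Let $\mathbb{S}_{p^n}=\{0,\ldots,p^n-1\}$, write $s=\sum_{i=1}^n s_{(n-i)}p^{n-i}$ with digits $s_{(n-i)}\in\{0,\ldots,p-1\}$, and write $s\preceq t$ if $s_{(n-i)}\le t_{(n-i)}$ for all $i$. Let $b_1,\ldots,b_n$ be integers prime to $p$ (shift parameters), let $\mathfrak{b}(s)=\sum_{i=1}^n s_{(n-i)}p^{n-i}b_i$, and let $\mathfrak{a}:\mathbb{Z}\to\mathbb{S}_{p^n}$ be defined by $\mathfrak{a}(t)\in\mathbb{S}_{p^n}$, $\mathfrak{b}(\mathfrak{a}(t))\equiv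 -t \bmod p^n$ (well defined since $s\mapsto \mathfrak{b}(s)\bmod p^n$ is a bijection of $\mathbb{S}_{p^n}$). Let $\Psi_1,\ldots,\Psi_n\in A$, and for $s\in\mathbb{S}_{p^n}$ let $\Upsilon^{(s)}$ be the set of monomials in the (not necessarily commuting) $\Psi_i$ in which the exponents of $\Psi_i$ sum to $s_{(n-i)}$ for each $i$. Consider the conditions: (C1) $\Psi_i\cdot 1=0$ for each $i$; (C2) $v_L(\Psi\cdot\rho)=v_L(\rho)+\mathfrak{b}(s)$ for all $\Psi\in\Upsilon^{(s)}$ and all $s\in\mathbb{S}_{p^n}$, for a given $\rho\in L\setminus\{0\}$; (C3) $v_L(\Psi_i^p\cdot\alpha)>v_L(\alpha)+b_ip^{n-i+1}$ for all $i$ and all $\alpha\in L\setminus\{0\}$; (C4) $\Psi_i^p=0$ for all $i$. Let $\{\lambda_t\}_{t\in\mathbb{Z}}$ be elements of $L$ with $v_L(\lambda_t)=t$ and $\lambda_{t_1}\lambda_{t_2}^{-1}\in K$ whenever $t_1\equiv t_2\bmod p^n$. An $A$-scaffold on $L$ of tolerance $\mathfrak{T}\ge1$ with shift parameters $b_1,\ldots,b_n$ consists of such $\lambda_t$ together with $\Psi_i\in A$ satisfying $\Psi_i\cdot1=0$ and, for each $i$ and $t$, there is a unit $u_{i,t}\in\mathfrak{O}_K^\times$ with $\Psi_i\cdot\lambda_t\equiv u_{i,t}\lambda_{t+p^{n-i}b_i}$ if $\mathfrak{a}(t)_{(n-i)}\ge1$ and $\Psi_i\cdot\lambda_t\equiv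 0$ if $\mathfrak{a}(t)_{(n-i)}=0$, modulo $\lambda_{t+p^{n-i}b_i}\mathfrak{P}_L^{\mathfrak{T}}$ (with $\mathfrak{P}_L$ the maximal ideal of the valuation ring of $L$); tolerance $\infty$ means these congruences are equalities. *)

theory Defs
  imports Main "HOL-Library.Extended_Nat" "HOL-Computational_Algebra.Primes"
begin

text \<open>L is the whole type 'l (a field); K is a subfield given as a subset.
  v is the normalized valuation v_L on L, only meaningful on nonzero elements;
  the convention v_L(0) = infinity is encoded via vge below.\<close>

definition vge :: "('l::field \<Rightarrow> int) \<Rightarrow> 'l \<Rightarrow> int \<Rightarrow> bool" where
  "vge v x m \<longleftrightarrow> x = 0 \<or> m \<le> v x"

definition normalized_valuation :: "('l::field \<Rightarrow> int) \<Rightarrow> bool" where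
  "normalized_valuation v \<longleftrightarrow>
     (\<forall>x y. x \<noteq> 0 \<longrightarrow> y \<noteq> 0 \<longrightarrow> v (x * y) = v x + v y) \<and>
     (\<forall>x y. x \<noteq> 0 \<longrightarrow> y \<noteq> 0 \<longrightarrow> x + y \<noteq> 0 \<longrightarrow> min (v x) (v y) \<le> v (x + y)) \<and>
     (\<forall>m. \<exists>x. x \<noteq> 0 \<and> v x = m)"

definition is_subfield :: "'l::field set \<Rightarrow> bool" where
  "is_subfield K \<longleftrightarrow> 0 \<in> K \<and> 1 \<in> K \<and>
     (\<forall>x\<in>K. \<forall>y\<in>K. x + y \<in> K \<and> x * y \<in> K) \<and>
     (\<forall>x\<in>K. - x \<in> K \<and> (x \<noteq> 0 \<longrightarrow> inverse x \<in> K))"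

definition complete_wrt :: "('l::field \<Rightarrow> int) \<Rightarrow> 'l set \<Rightarrow> bool" where
  "complete_wrt v K \<longleftrightarrow>
     (\<forall>X :: nat \<Rightarrow> 'l. (\<forall>k. X k \<in> K) \<longrightarrow>
        (\<forall>M. \<exists>N. \<forall>i\<ge>N. \<forall>j\<ge>N. vge v (X i - X j) M) \<longrightarrow>
        (\<exists>c\<in>K. \<forall>M. \<exists>N. \<forall>i\<ge>N. vge v (X i - c) M))"

definition val_ring :: "('l::field \<Rightarrow> int) \<Rightarrow> 'l set \<Rightarrow> 'l set" where
  "val_ring v K = {x \<in> K. vge v x 0}"

definition residue_classes :: "('l::field \<Rightarrow> int) \<Rightarrow> 'l set \<Rightarrow> 'l set set" where
  "residue_classes v K = (\<lambda>x. {y \<in> val_ring v K. vge v (y - x) 1}) ` val_ring v K"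

definition has_K_basis :: "'l::field set \<Rightarrow> nat \<Rightarrow> bool" where
  "has_K_basis K N \<longleftrightarrow> (\<exists>e :: nat \<Rightarrow> 'l.
     (\<forall>x. \<exists>c. (\<forall>j<N. c j \<in> K) \<and> x = (\<Sum>j<N. c j * e j)) \<and>
     (\<forall>c. (\<forall>j<N. c j \<in> K) \<longrightarrow> (\<Sum>j<N. c j * e j) = 0 \<longrightarrow> (\<forall>j<N. c j = 0)))"

text \<open>K is a local field with residue characteristic p (finite residue field of
  characteristic p, complete discretely valued), and L/K is totally ramified of
  degree p^n: [L:K] = p^n and v_L(K^x) = p^n Z.\<close>
definition totally_ramified_local :: "('l::field \<Rightarrow> int) \<Rightarrow> 'l set \<Rightarrow> nat \<Rightarrow> nat \<Rightarrow> bool" where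
  "totally_ramified_local v K p n \<longleftrightarrow>
     normalized_valuation v \<and> is_subfield K \<and> complete_wrt v K \<and>
     prime p \<and> finite (residue_classes v K) \<and> vge v (of_nat p) 1 \<and>
     v ` (K - {0}) = {int (p ^ n) * m | m. True} \<and>
     has_K_basis K (p ^ n)"

text \<open>A is the whole type 'a (a ring with 1); iota is the structure map K \<rightarrow> A;
  act is the action of A on L.\<close>
definition K_algebra_acting ::
  "'l::field set \<Rightarrow> ('l \<Rightarrow> 'a::ring_1) \<Rightarrow> ('a \<Rightarrow> 'l \<Rightarrow> 'l) \<Rightarrow> nat \<Rightarrow> bool" where
  "K_algebra_acting K \<iota> act N \<longleftrightarrow>
     (\<forall>x\<in>K. \<forall>y\<in>K. \<iota> (x + y) = \<iota> x + \<iota> y \<and> \<iota> (x * y) = \<iota> x * \<iota> y) \<and>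
     \<iota> 1 = 1 \<and>
     (\<forall>x\<in>K. \<forall>a. \<iota> x * a = a * \<iota> x) \<and>
     (\<exists>e :: nat \<Rightarrow> 'a.
        (\<forall>a. \<exists>c. (\<forall>j<N. c j \<in> K) \<and> a = (\<Sum>j<N. \<iota> (c j) * e j)) \<and>
        (\<forall>c. (\<forall>j<N. c j \<in> K) \<longrightarrow> (\<Sum>j<N. \<iota> (c j) * e j) = 0 \<longrightarrow> (\<forall>j<N. c j = 0))) \<and>
     (\<forall>a b z. act (a + b) z = act a z + act b z) \<and>
     (\<forall>a z w. act a (z + w) = act a z + act a w) \<and>
     (\<forall>a b z. act (a * b) z = act a (act b z)) \<and>
     (\<forall>z. act 1 z = z) \<and>
     (\<forall>k\<in>K. \<forall>z. act (\<iota> k) z = k * z) \<and>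
     (\<forall>k\<in>K. \<forall>a z. act a (k * z) = k * act a z)"

definition digit :: "nat \<Rightarrow> nat \<Rightarrow> nat \<Rightarrow> nat" where
  "digit p s j = (s div p ^ j) mod p"

definition bfun :: "nat \<Rightarrow> nat \<Rightarrow> (nat \<Rightarrow> int) \<Rightarrow> nat \<Rightarrow> int" where
  "bfun p n b s = (\<Sum>i\<in>{1..n}. int (digit p s (n - i)) * int (p ^ (n - i)) * b i)"

definition afun :: "nat \<Rightarrow> nat \<Rightarrow> (nat \<Rightarrow> int) \<Rightarrow> int \<Rightarrow> nat" where
  "afun p n b t = (THE s. s < p ^ n \<and> bfun p n b s mod int (p ^ n) = (- t) mod int (p ^ n))"

definition Upsilon :: "nat \<Rightarrow> nat \<Rightarrow> (nat \<Rightarrow> 'a::ring_1) \<Rightarrow> nat \<Rightarrow> 'a set" where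
  "Upsilon p n \<Psi> s = {prod_list (map \<Psi> w) | w. set w \<subseteq> {1..n} \<and>
       (\<forall>i\<in>{1..n}. count_list w i = digit p s (n - i))}"

definition C1 :: "nat \<Rightarrow> ('a::ring_1 \<Rightarrow> 'l::field \<Rightarrow> 'l) \<Rightarrow> (nat \<Rightarrow> 'a) \<Rightarrow> bool" where
  "C1 n act \<Psi> \<longleftrightarrow> (\<forall>i\<in>{1..n}. act (\<Psi> i) 1 = 0)"

definition C2 :: "('l::field \<Rightarrow> int) \<Rightarrow> nat \<Rightarrow> nat \<Rightarrow> (nat \<Rightarrow> int) \<Rightarrow>
    ('a::ring_1 \<Rightarrow> 'l \<Rightarrow> 'l) \<Rightarrow> (nat \<Rightarrow> 'a) \<Rightarrow> 'l \<Rightarrow> bool" where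
  "C2 v p n b act \<Psi> \<rho> \<longleftrightarrow> (\<forall>s < p ^ n. \<forall>\<Phi> \<in> Upsilon p n \<Psi> s.
       act \<Phi> \<rho> \<noteq> 0 \<and> v (act \<Phi> \<rho>) = v \<rho> + bfun p n b s)"

definition C3 :: "('l::field \<Rightarrow> int) \<Rightarrow> nat \<Rightarrow> nat \<Rightarrow> (nat \<Rightarrow> int) \<Rightarrow>
    ('a::ring_1 \<Rightarrow> 'l \<Rightarrow> 'l) \<Rightarrow> (nat \<Rightarrow> 'a) \<Rightarrow> bool" where
  "C3 v p n b act \<Psi> \<longleftrightarrow> (\<forall>i\<in>{1..n}. \<forall>\<alpha>. \<alpha> \<noteq> 0 \<longrightarrow>
       vge v (act (\<Psi> i ^ p) \<alpha>) (v \<alpha> + b i * int (p ^ (n - i + 1)) + 1))"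

definition C4 :: "nat \<Rightarrow> nat \<Rightarrow> (nat \<Rightarrow> 'a::ring_1) \<Rightarrow> bool" where
  "C4 p n \<Psi> \<longleftrightarrow> (\<forall>i\<in>{1..n}. \<Psi> i ^ p = 0)"

definition lambda_family :: "('l::field \<Rightarrow> int) \<Rightarrow> 'l set \<Rightarrow> nat \<Rightarrow> nat \<Rightarrow> (int \<Rightarrow> 'l) \<Rightarrow> bool" where
  "lambda_family v K p n lam \<longleftrightarrow> (\<forall>t. lam t \<noteq> 0 \<and> v (lam t) = t) \<and>
     (\<forall>t1 t2. t1 mod int (p ^ n) = t2 mod int (p ^ n) \<longrightarrow> lam t1 * inverse (lam t2) \<in> K)"

text \<open>x = y modulo lambda_s P_L^T (T finite), where v_L(lambda_s) = s; for T = infinity,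
  equality.\<close>
definition cong_tol :: "('l::field \<Rightarrow> int) \<Rightarrow> 'l \<Rightarrow> 'l \<Rightarrow> int \<Rightarrow> enat \<Rightarrow> bool" where
  "cong_tol v x y s T = (case T of \<infinity> \<Rightarrow> x = y | enat m \<Rightarrow> vge v (x - y) (s + int m))"

definition scaffold :: "('l::field \<Rightarrow> int) \<Rightarrow> 'l set \<Rightarrow> ('a::ring_1 \<Rightarrow> 'l \<Rightarrow> 'l) \<Rightarrow>
    nat \<Rightarrow> nat \<Rightarrow> (nat \<Rightarrow> int) \<Rightarrow> (nat \<Rightarrow> 'a) \<Rightarrow> (int \<Rightarrow> 'l) \<Rightarrow> enat \<Rightarrow> bool" where
  "scaffold v K act p n b \<Psi> lam T \<longleftrightarrow> 1 \<le> T \<and> lambda_family v K p n lam \<and>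
     (\<forall>i\<in>{1..n}. act (\<Psi> i) 1 = 0) \<and>
     (\<forall>i\<in>{1..n}. \<forall>t. (let s = t + int (p ^ (n - i)) * b i in
        (if 1 \<le> digit p (afun p n b t) (n - i)
         then (\<exists>u\<in>K. u \<noteq> 0 \<and> v u = 0 \<and> cong_tol v (act (\<Psi> i) (lam t)) (u * lam s) s T)
         else cong_tol v (act (\<Psi> i) (lam t)) 0 s T)))"

end

theory Submission
  imports Defs "HOL-Algebra.Embedded_Algebras"
begin

text \<open>
  By (C2) the monomials \<open>\<Psi>\<^sup>(\<^sup>s\<^sup>)\<rho>\<close>, \<open>s < p^n\<close>, have valuations \<open>v \<rho> + \<b>(s)\<close>, which meet every residue
  class modulo \<open>p^n = [L:K]\<close> once. As \<open>v(K\<^sup>\<times>) = p^n \<int>\<close>, they form a \<open>K\<close>-basis of \<open>L\<close> in which every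
  \<open>x\<close> has a single dominant term, the one with \<open>s = \<a>(v \<rho> - v x)\<close>. Applying \<open>\<Psi>\<^sub>i\<close> to it raises the
  digit \<open>s\<^sub>(\<^sub>n\<^sub>-\<^sub>i\<^sub>)\<close> by one and the valuation by \<open>p^(n-i) b\<^sub>i\<close>, unless that digit is already \<open>p - 1\<close>,
  in which case (C3) pushes the valuation further up. Since \<open>\<Psi>\<^sub>i 1 = 0\<close>, all digits of \<open>\<a>(v \<rho>)\<close>
  equal \<open>p - 1\<close>, so the digits of \<open>\<a>(v \<rho> - t)\<close> are complementary to those of \<open>\<a>(t)\<close>: this is the
  scaffold dichotomy, to first order. Under (C4) and commutativity the elements \<open>\<lambda>\<^sub>t\<close> can be taken to
  be these monomials times powers of a uniformizer of \<open>K\<close>, on which the \<open>\<Psi>\<^sub>i\<close> act exactly.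
  Conversely, expanding \<open>x\<close> in the basis \<open>\<lambda>\<^sub>v\<^sub>(\<^sub>x\<^sub>)\<^sub>+\<^sub>j\<close> shows that a scaffold determines \<open>v(\<Psi>\<^sub>i x)\<close>
  from the digits of \<open>\<a>(v x)\<close>; iterating gives (C3), and (C2) for \<open>\<rho>\<close> with \<open>\<a>(v \<rho>) = p^n - 1\<close>.
\<close>

section \<open>Linear algebra over a subfield\<close>

text \<open>A field type seen as an HOL-Algebra ring record, so that the dimension theory of
  \<open>Embedded_Algebras\<close> applies to \<open>L\<close> as a vector space over a subfield.\<close>

definition field_ring :: "'l::field ring" where
  "field_ring = \<lparr>carrier = UNIV, monoid.mult = (*), one = 1, ring.zero = 0, add = (+)\<rparr>"

lemma field_ring_simps [simp]:
  "carrier field_ring = UNIV" "monoid.mult field_ring = (*)" "one field_ring = 1"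
  "zero field_ring = 0" "add field_ring = (+)"
  by (simp_all add: field_ring_def)

lemma field_field_ring: "field (field_ring :: 'l::field ring)"
proof -
  have "\<exists>y. x + y = 0" for x :: 'l
    using add.right_inverse by blast
  moreover have "x \<noteq> 0 \<Longrightarrow> \<exists>y. x * y = 1" for x :: 'l
    by (rule exI[of _ "inverse x"]) auto
  ultimately show ?thesis
    unfolding field_ring_def by unfold_locales (auto simp: algebra_simps Units_def)
qed

lemma subfield_field_ring:
  assumes "is_subfield (K :: 'l::field set)"
  shows "subfield K field_ring"
proof -
  interpret field field_ring by (rule field_field_ring)
  have K: "0 \<in> K" "1 \<in> K" "\<And>x y. x \<in> K \<Longrightarrow> y \<in> K \<Longrightarrow> x + y \<in> K \<and> x * y \<in> K"
    and neg: "\<And>x. x \<in> K \<Longrightarrow> - x \<in> K" and inv: "\<And>x. x \<in> K \<Longrightarrow> x \<noteq> 0 \<Longrightarrow> inverse x \<in> K"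
    using assms unfolding is_subfield_def by auto
  have add_inverse: "\<And>x. x \<in> K \<Longrightarrow> \<exists>y\<in>K. x + y = 0"
    and mult_inverse: "\<And>x. x \<in> K \<Longrightarrow> x \<noteq> 0 \<Longrightarrow> \<exists>y\<in>K. x * y = 1"
    using neg inv by force+
  have "field (field_ring\<lparr>carrier := K\<rparr>)"
    unfolding field_ring_def using K add_inverse mult_inverse
    by unfold_locales (auto simp: algebra_simps Units_def)
  then show ?thesis using subfield_iff(1) by simp
qed

lemma combine_field_ring:
  "ring.combine field_ring Ks Us = (\<Sum>j<min (length Ks) (length Us). Ks ! j * Us ! j)"
proof (induction Us arbitrary: Ks)
  case Nil
  interpret field field_ring by (rule field_field_ring)
  show ?case by (cases Ks) auto
next
  case (Cons u Us)
  interpret field field_ring by (rule field_field_ring)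
  show ?case
    using Cons.IH by (cases Ks) (simp_all del: sum.lessThan_Suc add: sum.lessThan_Suc_shift)
qed

lemma combine_field_ring_upt:
  assumes "length Ks = N"
  shows "ring.combine field_ring Ks (map f [0..<N]) = (\<Sum>j<N. Ks ! j * f j)"
  using assms by (simp add: combine_field_ring)

definition K_independent :: "'l::field set \<Rightarrow> nat \<Rightarrow> (nat \<Rightarrow> 'l) \<Rightarrow> bool" where
  "K_independent K N f \<longleftrightarrow>
     (\<forall>c. (\<forall>j<N. c j \<in> K) \<longrightarrow> (\<Sum>j<N. c j * f j) = 0 \<longrightarrow> (\<forall>j<N. c j = 0))"

definition K_spanning :: "'l::field set \<Rightarrow> nat \<Rightarrow> (nat \<Rightarrow> 'l) \<Rightarrow> bool" where
  "K_spanning K N f \<longleftrightarrow> (\<forall>x. \<exists>c. (\<forall>j<N. c j \<in> K) \<and> x = (\<Sum>j<N. c j * f j))"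

lemma has_K_basis_iff: "has_K_basis K N \<longleftrightarrow> (\<exists>e. K_spanning K N e \<and> K_independent K N e)"
  unfolding has_K_basis_def K_spanning_def K_independent_def by blast

lemma independent_field_ring:
  assumes K: "is_subfield K" and ind: "K_independent K N f"
  shows "ring.independent field_ring K (map f [0..<N])"
proof -
  interpret field field_ring by (rule field_field_ring)
  show ?thesis
  proof (rule trivial_combine_imp_independent[OF subfield_field_ring[OF K]])
    fix Ks assume Ks: "set Ks \<subseteq> K" and c0: "combine Ks (map f [0..<N]) = \<zero>\<^bsub>field_ring\<^esub>"
    define c where "c j = (if j < length Ks then Ks ! j else 0)" for j
    have cK: "\<forall>j<N. c j \<in> K"
      using Ks K unfolding c_def is_subfield_def by (auto simp: set_conv_nth subset_iff)
    have "(\<Sum>j<N. c j * f j) = (\<Sum>j<min (length Ks) N. c j * f j)"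
      by (rule sum.mono_neutral_right) (auto simp: c_def)
    also have "\<dots> = 0"
      using c0 by (simp add: combine_field_ring c_def)
    finally have "\<forall>j<N. c j = 0" using ind cK unfolding K_independent_def by blast
    then show "set (take (length (map f [0..<N])) Ks) \<subseteq> {\<zero>\<^bsub>field_ring\<^esub>}"
      by (auto simp: set_conv_nth c_def)
  qed simp
qed

lemma span_field_ring:
  assumes K: "is_subfield K"
  shows "ring.Span field_ring K (map f [0..<N]) = UNIV \<longleftrightarrow> K_spanning K N f"
proof -
  interpret field field_ring by (rule field_field_ring)
  have "x \<in> Span K (map f [0..<N]) \<longleftrightarrow> (\<exists>c. (\<forall>j<N. c j \<in> K) \<and> x = (\<Sum>j<N. c j * f j))" for x
  proof
    assume "x \<in> Span K (map f [0..<N])"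
    then obtain Ks where "set Ks \<subseteq> K" "length Ks = N" "x = combine Ks (map f [0..<N])"
      using Span_mem_iff_length_version[OF subfield_field_ring[OF K]] by auto
    then show "\<exists>c. (\<forall>j<N. c j \<in> K) \<and> x = (\<Sum>j<N. c j * f j)"
      by (intro exI[of _ "(!) Ks"]) (auto simp: combine_field_ring_upt)
  next
    assume "\<exists>c. (\<forall>j<N. c j \<in> K) \<and> x = (\<Sum>j<N. c j * f j)"
    then obtain c where "\<forall>j<N. c j \<in> K" "x = (\<Sum>j<N. c j * f j)" by blast
    then show "x \<in> Span K (map f [0..<N])"
      by (subst Span_mem_iff_length_version[OF subfield_field_ring[OF K]])
        (auto intro!: exI[of _ "map c [0..<N]"] simp: combine_field_ring_upt)
  qed
  then show ?thesis unfolding K_spanning_def by auto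
qed

lemma independent_imp_spanning:
  assumes K: "is_subfield K" and B: "has_K_basis K N" and ind: "K_independent K N f"
  shows "K_spanning K N f"
proof -
  interpret field field_ring by (rule field_field_ring)
  obtain e where "K_spanning K N e" "K_independent K N e"
    using B has_K_basis_iff by blast
  then have "dimension N K UNIV"
    using dimensionI[OF subfield_field_ring[OF K] independent_field_ring[OF K]] span_field_ring[OF K]
    by fastforce
  then show ?thesis
    using independent_length_eq_dimension[OF subfield_field_ring[OF K] _ independent_field_ring[OF K ind]]
      span_field_ring[OF K] by force
qed

section \<open>Base-\<open>p\<close> digits and the function \<open>\<a>\<close>\<close>

fun from_digits :: "nat \<Rightarrow> nat \<Rightarrow> (nat \<Rightarrow> nat) \<Rightarrow> nat" where
  "from_digits p 0 d = 0"
| "from_digits p (Suc n) d = d 0 + p * from_digits p n (\<lambda>j. d (Suc j))"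

lemma digit_less: "0 < p \<Longrightarrow> digit p s j < p"
  by (simp add: digit_def)

lemma digit_0: "digit p s 0 = s mod p"
  by (simp add: digit_def)

lemma digit_Suc: "digit p s (Suc j) = digit p (s div p) j"
  by (simp add: digit_def div_mult2_eq mult.commute)

lemma from_digits_less: "0 < p \<Longrightarrow> \<forall>j<n. d j < p \<Longrightarrow> from_digits p n d < p ^ n"
proof (induction n arbitrary: d)
  case (Suc n)
  have "from_digits p n (\<lambda>j. d (Suc j)) + 1 \<le> p ^ n" and "d 0 < p"
    using Suc by (auto simp: Suc_le_eq)
  then have "d 0 + p * from_digits p n (\<lambda>j. d (Suc j)) < p * (from_digits p n (\<lambda>j. d (Suc j)) + 1)"
    by simp
  also have "\<dots> \<le> p * p ^ n"
    using \<open>from_digits p n (\<lambda>j. d (Suc j)) + 1 \<le> p ^ n\<close> by (intro mult_left_mono) auto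
  finally show ?case by simp
qed simp

lemma digit_from_digits: "1 < p \<Longrightarrow> \<forall>j<n. d j < p \<Longrightarrow> j < n \<Longrightarrow> digit p (from_digits p n d) j = d j"
proof (induction n arbitrary: d j)
  case (Suc n)
  then have "(d 0 + p * from_digits p n (\<lambda>j. d (Suc j))) div p = from_digits p n (\<lambda>j. d (Suc j))"
    by simp
  with Suc show ?case
    by (cases j) (simp_all add: digit_0 digit_Suc)
qed simp

lemma from_digits_digit: "0 < p \<Longrightarrow> s < p ^ n \<Longrightarrow> from_digits p n (digit p s) = s"
proof (induction n arbitrary: s)
  case (Suc n)
  then have "from_digits p n (digit p (s div p)) = s div p"
    by (simp add: div_less_iff_less_mult mult.commute)
  moreover have "(\<lambda>j. digit p s (Suc j)) = digit p (s div p)"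
    by (simp add: digit_Suc)
  ultimately show ?case by (simp add: digit_0)
qed simp

lemma from_digits_cong: "\<forall>j<n. d j = d' j \<Longrightarrow> from_digits p n d = from_digits p n d'"
  by (induction n arbitrary: d d') auto

lemma digits_inject:
  "0 < p \<Longrightarrow> s < p ^ n \<Longrightarrow> s' < p ^ n \<Longrightarrow> \<forall>j<n. digit p s j = digit p s' j \<Longrightarrow> s = s'"
  by (metis from_digits_digit from_digits_cong)

lemma exists_digits:
  assumes "1 < p" "\<forall>j<n. d j < p"
  shows "\<exists>s<p ^ n. \<forall>j<n. digit p s j = d j"
  using assms from_digits_less digit_from_digits by (intro exI[of _ "from_digits p n d"]) auto

lemma from_digits_top: "from_digits p n (\<lambda>_. p - 1) = p ^ n - 1"
proof (induction n)
  case (Suc n)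
  have "p - 1 + p * (p ^ n - 1) = p * p ^ n - 1"
    by (cases "p = 0") (simp_all add: right_diff_distrib' Suc_le_eq)
  then show ?case using Suc by simp
qed simp

lemma digit_top: "1 < p \<Longrightarrow> j < n \<Longrightarrow> digit p (p ^ n - 1) j = p - 1"
  using digit_from_digits[of p n "\<lambda>_. p - 1" j] from_digits_top[of p n] by simp

lemma eq_top_iff_digits:
  "1 < p \<Longrightarrow> s < p ^ n \<Longrightarrow> s = p ^ n - 1 \<longleftrightarrow> (\<forall>j<n. digit p s j = p - 1)"
  using digits_inject[of p s n "p ^ n - 1"] digit_top[of p] by fastforce

lemma bfun_conv_sum: "bfun p n b s = (\<Sum>j<n. int (digit p s j) * int p ^ j * b (n - j))"
  unfolding bfun_def
  by (rule sum.reindex_bij_witness[of _ "\<lambda>j. n - j" "\<lambda>i. n - i"]) auto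

lemma bfun_diff:
  "bfun p n b s' - bfun p n b s = (\<Sum>j<n. (int (digit p s' j) - int (digit p s j)) * int p ^ j * b (n - j))"
  by (simp add: bfun_conv_sum sum_subtractf[symmetric] algebra_simps)

lemma bfun_digit_update:
  assumes i: "i \<in> {1..n}" and s': "\<forall>j<n. digit p s' j = (if j = n - i then m else digit p s j)"
  shows "bfun p n b s' = bfun p n b s + (int m - int (digit p s (n - i))) * int (p ^ (n - i)) * b i"
proof -
  have "bfun p n b s' - bfun p n b s =
      (\<Sum>j<n. if j = n - i then (int m - int (digit p s (n - i))) * int p ^ j * b (n - j) else 0)"
    unfolding bfun_diff by (rule sum.cong) (use s' in auto)
  also have "\<dots> = (int m - int (digit p s (n - i))) * int (p ^ (n - i)) * b i"
    using i by (simp add: sum.delta')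
  finally show ?thesis by simp
qed

lemma digit_update_at:
  assumes i: "i \<in> {1..n}" and x: "x \<in> {1..n}"
    and ds: "\<forall>j<n. digit p s' j = (if j = n - i then m else digit p s j)"
  shows "digit p s' (n - x) = (if x = i then m else digit p s (n - x))"
proof -
  have "n - x < n" "n - x = n - i \<longleftrightarrow> x = i"
    using i x by auto
  then show ?thesis
    using ds by simp
qed

lemma bfun_complement:
  assumes p: "1 < p" and s': "\<forall>j<n. digit p s' j = p - 1 - digit p s j"
  shows "bfun p n b s' = bfun p n b (p ^ n - 1) - bfun p n b s"
proof -
  have "int (digit p s' j) * int p ^ j * b (n - j) + int (digit p s j) * int p ^ j * b (n - j) =
      int (digit p (p ^ n - 1) j) * int p ^ j * b (n - j)" if "j < n" for j
  proof -
    have "int (digit p s' j) + int (digit p s j) = int (digit p (p ^ n - 1) j)"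
      using that s' digit_top[OF p] digit_less[of p s j] p by simp
    then show ?thesis by (metis distrib_right)
  qed
  then have "bfun p n b s' + bfun p n b s = bfun p n b (p ^ n - 1)"
    unfolding bfun_conv_sum sum.distrib[symmetric] by (intro sum.cong) auto
  then show ?thesis by simp
qed

lemma weighted_digit_sums_dvd_imp_eq:
  fixes c :: "nat \<Rightarrow> int"
  assumes "prime p" "\<forall>j<n. d j < p" "\<forall>j<n. d' j < p" "\<forall>j<n. \<not> int p dvd c j"
    and "int p ^ n dvd (\<Sum>j<n. (int (d j) - int (d' j)) * int p ^ j * c j)"
  shows "\<forall>j<n. d j = d' j"
  using assms(2-)
proof (induction n arbitrary: d d' c)
  case (Suc n)
  define Y where "Y = (\<Sum>j<n. (int (d (Suc j)) - int (d' (Suc j))) * int p ^ j * c (Suc j))"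
  have split: "(\<Sum>j<Suc n. (int (d j) - int (d' j)) * int p ^ j * c j) =
      (int (d 0) - int (d' 0)) * c 0 + int p * Y"
    unfolding Y_def
    by (simp del: sum.lessThan_Suc add: sum.lessThan_Suc_shift sum_distrib_left algebra_simps)
  have "int p dvd int p ^ Suc n" by simp
  moreover have "int p ^ Suc n dvd (int (d 0) - int (d' 0)) * c 0 + int p * Y"
    using Suc.prems(4) split by simp
  ultimately have "int p dvd (int (d 0) - int (d' 0)) * c 0 + int p * Y"
    by (rule dvd_trans)
  then have "int p dvd (int (d 0) - int (d' 0)) * c 0"
    by (simp add: dvd_add_left_iff)
  then have "int p dvd int (d 0) - int (d' 0)"
    using Suc.prems(3) \<open>prime p\<close> prime_dvd_mult_iff[of "int p"] by auto
  moreover have "\<bar>int (d 0) - int (d' 0)\<bar> < int p"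
  proof -
    have "d 0 < p" "d' 0 < p" using Suc.prems(1,2) by auto
    then show ?thesis by linarith
  qed
  ultimately have d0: "d 0 = d' 0"
    using dvd_imp_le_int[of "int (d 0) - int (d' 0)" "int p"] by force
  then have "int p * int p ^ n dvd int p * Y"
    using Suc.prems(4) split by simp
  then have "int p ^ n dvd Y"
    using \<open>prime p\<close> by (simp add: prime_gt_0_nat)
  moreover have "\<forall>j<n. d (Suc j) < p" "\<forall>j<n. d' (Suc j) < p" "\<forall>j<n. \<not> int p dvd c (Suc j)"
    using Suc.prems(1-3) by auto
  ultimately have "\<forall>j<n. d (Suc j) = d' (Suc j)"
    using Suc.IH[of "\<lambda>j. d (Suc j)" "\<lambda>j. d' (Suc j)" "\<lambda>j. c (Suc j)"] unfolding Y_def by blast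
  then show ?case
    using d0 by (metis less_Suc_eq_0_disj)
qed simp

locale shift_parameters =
  fixes p n :: nat and b :: "nat \<Rightarrow> int"
  assumes prime_p: "prime p" and shifts: "\<forall>i\<in>{1..n}. \<not> int p dvd b i"
begin

lemma p_gt_1: "1 < p"
  using prime_p prime_gt_1_nat by blast

lemma bfun_mod_inj:
  assumes s: "s < p ^ n" and s': "s' < p ^ n"
    and eq: "bfun p n b s mod int (p ^ n) = bfun p n b s' mod int (p ^ n)"
  shows "s = s'"
proof -
  have "int p ^ n dvd bfun p n b s - bfun p n b s'"
    using eq by (simp add: mod_eq_dvd_iff)
  then have dvd: "int p ^ n dvd (\<Sum>j<n. (int (digit p s j) - int (digit p s' j)) * int p ^ j * b (n - j))"
    by (simp only: bfun_diff)
  have sh: "\<forall>j<n. \<not> int p dvd b (n - j)"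
    using shifts by auto
  have ds: "\<forall>j<n. digit p s j < p" "\<forall>j<n. digit p s' j < p"
    using digit_less p_gt_1 by auto
  have "\<forall>j<n. digit p s j = digit p s' j"
    using weighted_digit_sums_dvd_imp_eq[of p n "digit p s" "digit p s'" "\<lambda>j. b (n - j)"] prime_p ds sh dvd
    by simp
  then show ?thesis
    using digits_inject[OF _ s s'] p_gt_1 by simp
qed

lemma afun_ex1: "\<exists>!s. s < p ^ n \<and> bfun p n b s mod int (p ^ n) = (- t) mod int (p ^ n)"
proof -
  define f where "f s = bfun p n b s mod int (p ^ n)" for s
  have inj: "inj_on f {..<p ^ n}"
    unfolding inj_on_def f_def using bfun_mod_inj by blast
  have "card (f ` {..<p ^ n}) = card {0..<int (p ^ n)}"
    using card_image[OF inj] by (simp del: of_nat_power)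
  then have "f ` {..<p ^ n} = {0..<int (p ^ n)}"
    unfolding f_def using p_gt_1 by (intro card_subset_eq) auto
  moreover have "(- t) mod int (p ^ n) \<in> {0..<int (p ^ n)}"
    using p_gt_1 by auto
  ultimately obtain s where "s < p ^ n" "f s = (- t) mod int (p ^ n)"
    by (metis imageE lessThan_iff)
  then show ?thesis
    unfolding f_def using bfun_mod_inj by metis
qed

lemma afun_less: "afun p n b t < p ^ n"
  and bfun_afun_mod: "bfun p n b (afun p n b t) mod int (p ^ n) = (- t) mod int (p ^ n)"
proof -
  have "afun p n b t < p ^ n \<and> bfun p n b (afun p n b t) mod int (p ^ n) = (- t) mod int (p ^ n)"
    unfolding afun_def by (rule theI'[OF afun_ex1])
  then show "afun p n b t < p ^ n" "bfun p n b (afun p n b t) mod int (p ^ n) = (- t) mod int (p ^ n)"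
    by blast+
qed

lemma afun_eqI:
  assumes "s < p ^ n" "bfun p n b s mod int (p ^ n) = (- t) mod int (p ^ n)"
  shows "afun p n b t = s"
  using afun_less[of t] bfun_afun_mod[of t] afun_ex1[of t] assms by blast

lemma afun_cong:
  assumes "t1 mod int (p ^ n) = t2 mod int (p ^ n)"
  shows "afun p n b t1 = afun p n b t2"
proof -
  have "(- t1) mod int (p ^ n) = (- t2) mod int (p ^ n)"
    using assms by (rule mod_minus_cong)
  then show ?thesis
    using bfun_afun_mod[of t2] by (intro afun_eqI[OF afun_less]) simp
qed

lemma bfun_afun_dvd: "int (p ^ n) dvd bfun p n b (afun p n b t) + t"
  using bfun_afun_mod[of t] by (simp add: mod_eq_dvd_iff)

lemma afun_eq_iff_bfun_dvd:
  assumes "s < p ^ n"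
  shows "afun p n b t = s \<longleftrightarrow> int (p ^ n) dvd bfun p n b s + t"
proof
  assume "int (p ^ n) dvd bfun p n b s + t"
  then have "bfun p n b s mod int (p ^ n) = (- t) mod int (p ^ n)"
    by (simp add: mod_eq_dvd_iff)
  then show "afun p n b t = s" by (rule afun_eqI[OF assms])
next
  assume "afun p n b t = s"
  then show "int (p ^ n) dvd bfun p n b s + t"
    using bfun_afun_dvd[of t] by simp
qed

lemma digit_afun_shift:
  assumes i: "i \<in> {1..n}" and d: "1 \<le> digit p (afun p n b t) (n - i)"
  shows "\<forall>j<n. digit p (afun p n b (t + int (p ^ (n - i)) * b i)) j =
     (if j = n - i then digit p (afun p n b t) (n - i) - 1 else digit p (afun p n b t) j)"
proof -
  let ?a = "afun p n b t"
  obtain s where s: "s < p ^ n"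
    and ds: "\<forall>j<n. digit p s j = (if j = n - i then digit p ?a (n - i) - 1 else digit p ?a j)"
    using exists_digits[OF p_gt_1, of n "\<lambda>j. if j = n - i then digit p ?a (n - i) - 1 else digit p ?a j"]
      digit_less[of p] p_gt_1 by (force simp: less_imp_diff_less)
  have "bfun p n b s = bfun p n b ?a - int (p ^ (n - i)) * b i"
    using bfun_digit_update[OF i ds] d by (simp add: of_nat_diff)
  then have "int (p ^ n) dvd bfun p n b s + (t + int (p ^ (n - i)) * b i)"
    using bfun_afun_dvd[of t] by simp
  then have "afun p n b (t + int (p ^ (n - i)) * b i) = s"
    using afun_eq_iff_bfun_dvd[OF s] by blast
  then show ?thesis
    using ds by simp
qed

lemma digit_afun_complement:
  assumes r: "afun p n b r = p ^ n - 1" and j: "j < n"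
  shows "digit p (afun p n b (r - t)) j = p - 1 - digit p (afun p n b t) j"
proof -
  obtain s where s: "s < p ^ n" and ds: "\<forall>j<n. digit p s j = p - 1 - digit p (afun p n b t) j"
    using exists_digits[OF p_gt_1, of n "\<lambda>j. p - 1 - digit p (afun p n b t) j"] p_gt_1 by force
  have eq: "bfun p n b s + (r - t) = (bfun p n b (afun p n b r) + r) - (bfun p n b (afun p n b t) + t)"
    using bfun_complement[OF p_gt_1 ds] r by simp
  have "int (p ^ n) dvd (bfun p n b (afun p n b r) + r) - (bfun p n b (afun p n b t) + t)"
    by (rule dvd_diff[OF bfun_afun_dvd bfun_afun_dvd])
  then have "afun p n b (r - t) = s"
    unfolding afun_eq_iff_bfun_dvd[OF s] eq .
  then show ?thesis
    using ds j by simp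
qed

lemma digit_afun_complement_shift:
  assumes r: "afun p n b r = p ^ n - 1" and i: "i \<in> {1..n}"
    and d: "1 \<le> digit p (afun p n b t) (n - i)"
  shows "\<forall>j<n. digit p (afun p n b (r - (t + int (p ^ (n - i)) * b i))) j =
      (if j = n - i then digit p (afun p n b (r - t)) (n - i) + 1 else digit p (afun p n b (r - t)) j)"
proof -
  have "digit p (afun p n b t) (n - i) < p" "n - i < n"
    using digit_less p_gt_1 i by auto
  then show ?thesis
    using digit_afun_complement[OF r] digit_afun_shift[OF i d] d by (simp add: Suc_diff_Suc)
qed

lemma bfun_afun_complement_shift:
  assumes r: "afun p n b r = p ^ n - 1" and i: "i \<in> {1..n}"
    and d: "1 \<le> digit p (afun p n b t) (n - i)"
  shows "bfun p n b (afun p n b (r - (t + int (p ^ (n - i)) * b i))) =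
    bfun p n b (afun p n b (r - t)) + int (p ^ (n - i)) * b i"
  using bfun_digit_update[OF i digit_afun_complement_shift[OF r i d]] by simp

end

section \<open>The valuation of a totally ramified extension\<close>

locale totally_ramified_extension =
  fixes v :: "'l::field \<Rightarrow> int" and K :: "'l set" and p n :: nat
  assumes totally_ramified: "totally_ramified_local v K p n"
begin

lemma subfield_K: "is_subfield K"
  and v_K: "v ` (K - {0}) = {int (p ^ n) * m | m. True}"
  and has_basis: "has_K_basis K (p ^ n)"
  and normalized: "normalized_valuation v"
  using totally_ramified unfolding totally_ramified_local_def by auto

lemma degree_pos: "0 < p ^ n"
  using totally_ramified unfolding totally_ramified_local_def by (simp add: prime_gt_0_nat)

lemma K_one: "1 \<in> K"
  and K_mult: "x \<in> K \<Longrightarrow> y \<in> K \<Longrightarrow> x * y \<in> K"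
  and K_inverse: "x \<in> K \<Longrightarrow> inverse x \<in> K"
proof -
  have K: "1 \<in> K" "\<forall>x\<in>K. \<forall>y\<in>K. x * y \<in> K" "\<forall>x\<in>K. x \<noteq> 0 \<longrightarrow> inverse x \<in> K"
    using subfield_K unfolding is_subfield_def by auto
  then show "1 \<in> K" "x \<in> K \<Longrightarrow> y \<in> K \<Longrightarrow> x * y \<in> K"
    by auto
  show "x \<in> K \<Longrightarrow> inverse x \<in> K"
    using K(3) by (cases "x = 0") auto
qed

lemma v_mult: "x \<noteq> 0 \<Longrightarrow> y \<noteq> 0 \<Longrightarrow> v (x * y) = v x + v y"
  using normalized unfolding normalized_valuation_def by auto

lemma v_add_ge_min: "x \<noteq> 0 \<Longrightarrow> y \<noteq> 0 \<Longrightarrow> x + y \<noteq> 0 \<Longrightarrow> min (v x) (v y) \<le> v (x + y)"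
  using normalized unfolding normalized_valuation_def by auto

lemma v_one: "v 1 = 0"
  using v_mult[of 1 1] by simp

lemma v_inverse: "x \<noteq> 0 \<Longrightarrow> v (inverse x) = - v x"
  using v_mult[of x "inverse x"] v_one by simp

lemma v_uminus: "x \<noteq> 0 \<Longrightarrow> v (- x) = v x"
  using v_mult[of "-1" x] v_mult[of "-1" "-1"] v_one by simp

lemma vge_zero [simp]: "vge v 0 m"
  by (simp add: vge_def)

lemma vge_self: "vge v x (v x)"
  by (simp add: vge_def)

lemma vge_mono: "vge v x m \<Longrightarrow> m' \<le> m \<Longrightarrow> vge v x m'"
  by (auto simp: vge_def)

lemma vge_add: "vge v x m \<Longrightarrow> vge v y m \<Longrightarrow> vge v (x + y) m"
  unfolding vge_def using v_add_ge_min[of x y] by fastforce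

lemma vge_sum: "finite S \<Longrightarrow> \<forall>j\<in>S. vge v (f j) m \<Longrightarrow> vge v (sum f S) m"
  by (induction S rule: finite_induct) (auto intro: vge_add)

lemma vge_mult: "vge v x m \<Longrightarrow> y \<noteq> 0 \<Longrightarrow> vge v (y * x) (v y + m)"
  unfolding vge_def using v_mult by (cases "x = 0") auto

lemma v_add_dominant:
  assumes x: "x \<noteq> 0" and y: "vge v y (v x + 1)"
  shows "x + y \<noteq> 0 \<and> v (x + y) = v x"
proof (cases "y = 0")
  case False
  then have vy: "v x + 1 \<le> v y"
    using y by (simp add: vge_def)
  have ne: "x + y \<noteq> 0"
  proof
    assume "x + y = 0"
    then have "y = - x"
      by (simp add: add_eq_0_iff2 add.commute)
    then show False
      using vy v_uminus[OF x] by simp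
  qed
  have "v x \<le> v (x + y)"
    using v_add_ge_min[OF x False ne] vy by simp
  moreover have "min (v (x + y)) (v (- y)) \<le> v x"
    using v_add_ge_min[OF ne, of "- y"] False x by simp
  ultimately show ?thesis
    using ne vy v_uminus[OF False] by simp
qed (use x in simp)

lemma v_sum_dominant:
  assumes "finite S" "j0 \<in> S" "z j0 \<noteq> 0" "\<forall>j\<in>S - {j0}. vge v (z j) (v (z j0) + 1)"
  shows "sum z S \<noteq> 0 \<and> v (sum z S) = v (z j0)"
proof -
  have "vge v (sum z (S - {j0})) (v (z j0) + 1)"
    using vge_sum assms(1,4) by blast
  then show ?thesis
    using sum.remove[OF assms(1,2), of z] v_add_dominant[OF assms(3)] by presburger
qed

lemma exists_dominant_term:
  assumes S: "finite S" and nz: "\<exists>j\<in>S. z j \<noteq> 0"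
    and dist: "\<forall>j\<in>S. \<forall>j'\<in>S. z j \<noteq> 0 \<longrightarrow> z j' \<noteq> 0 \<longrightarrow> v (z j) = v (z j') \<longrightarrow> j = j'"
  obtains j0 where "j0 \<in> S" "z j0 \<noteq> 0" "\<forall>j\<in>S - {j0}. vge v (z j) (v (z j0) + 1)"
proof -
  define T where "T = {j\<in>S. z j \<noteq> 0}"
  have T: "finite T" "T \<noteq> {}"
    using S nz unfolding T_def by auto
  define m where "m = Min ((\<lambda>j. v (z j)) ` T)"
  have "m \<in> (\<lambda>j. v (z j)) ` T"
    unfolding m_def using T by simp
  then obtain j0 where "j0 \<in> T" "v (z j0) = m"
    by auto
  moreover have "m \<le> v (z j)" if "j \<in> T" for j
    using T that unfolding m_def by simp
  ultimately have j0: "j0 \<in> T" "\<forall>j\<in>T. v (z j0) \<le> v (z j)"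
    by auto
  have "vge v (z j) (v (z j0) + 1)" if "j \<in> S - {j0}" for j
    using that j0 dist unfolding T_def vge_def by fastforce
  then show thesis
    using that j0 unfolding T_def by blast
qed

lemma dvd_v_K:
  assumes "k \<in> K" "k \<noteq> 0"
  shows "int (p ^ n) dvd v k"
proof -
  have "v k \<in> v ` (K - {0})"
    using assms by auto
  then show ?thesis
    unfolding v_K by auto
qed

lemma exists_uniformizer: "\<exists>\<pi>\<in>K. \<pi> \<noteq> 0 \<and> v \<pi> = int (p ^ n)"
proof -
  have "int (p ^ n) \<in> v ` (K - {0})"
    using v_K by auto
  then show ?thesis by auto
qed

lemma power_int_uniformizer:
  assumes "\<pi> \<in> K" "\<pi> \<noteq> 0" "v \<pi> = int (p ^ n)"
  shows "\<pi> powi k \<in> K \<and> \<pi> powi k \<noteq> 0 \<and> v (\<pi> powi k) = k * int (p ^ n)"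
proof -
  have pow: "x ^ m \<in> K \<and> x ^ m \<noteq> 0 \<and> v (x ^ m) = int m * v x" if "x \<in> K" "x \<noteq> 0" for x m
    using that by (induction m) (auto simp: K_one v_one K_mult v_mult algebra_simps)
  show ?thesis
  proof (cases "0 \<le> k")
    case True
    then show ?thesis using pow[OF assms(1,2), of "nat k"] assms(3) by (simp add: power_int_def)
  next
    case False
    then show ?thesis
      using pow[of "inverse \<pi>" "nat (- k)"] assms K_inverse v_inverse by (simp add: power_int_def)
  qed
qed

text \<open>Since \<open>v(K\<^sup>\<times>) = p^n \<int>\<close>, distinct nonzero terms of a \<open>K\<close>-combination of such a family have
  distinct valuations, so the family is independent, hence a basis, and every element has a single
  dominant term.\<close>

definition valuation_transversal :: "(nat \<Rightarrow> 'l) \<Rightarrow> bool" where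
  "valuation_transversal f \<longleftrightarrow> (\<forall>j<p ^ n. f j \<noteq> 0) \<and> inj_on (\<lambda>j. v (f j) mod int (p ^ n)) {..<p ^ n}"

lemma transversal_terms_distinct:
  assumes f: "valuation_transversal f" and c: "\<forall>j<p ^ n. c j \<in> K"
  shows "\<forall>j\<in>{..<p ^ n}. \<forall>j'\<in>{..<p ^ n}. c j * f j \<noteq> 0 \<longrightarrow> c j' * f j' \<noteq> 0 \<longrightarrow>
      v (c j * f j) = v (c j' * f j') \<longrightarrow> j = j'"
proof (intro ballI impI)
  fix j j' assume j: "j \<in> {..<p ^ n}" "j' \<in> {..<p ^ n}"
    and nz: "c j * f j \<noteq> 0" "c j' * f j' \<noteq> 0" and eq: "v (c j * f j) = v (c j' * f j')"
  then have "v (f j) - v (f j') = v (c j') - v (c j)"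
    using v_mult by auto
  moreover have "int (p ^ n) dvd v (c j') - v (c j)"
    using dvd_v_K c j nz by auto
  ultimately have "v (f j) mod int (p ^ n) = v (f j') mod int (p ^ n)"
    by (simp add: mod_eq_dvd_iff)
  then show "j = j'"
    using f j unfolding valuation_transversal_def inj_on_def by blast
qed

lemma transversal_independent:
  assumes f: "valuation_transversal f"
  shows "K_independent K (p ^ n) f"
  unfolding K_independent_def
proof (intro allI impI)
  fix c j assume c: "\<forall>j<p ^ n. c j \<in> K" and sum0: "(\<Sum>j<p ^ n. c j * f j) = 0" and j: "j < p ^ n"
  show "c j = 0"
  proof (rule ccontr)
    assume "c j \<noteq> 0"
    then have "\<exists>j\<in>{..<p ^ n}. c j * f j \<noteq> 0"
      using f j unfolding valuation_transversal_def by auto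
    then obtain j0 where "j0 \<in> {..<p ^ n}" "c j0 * f j0 \<noteq> 0"
      "\<forall>j\<in>{..<p ^ n} - {j0}. vge v (c j * f j) (v (c j0 * f j0) + 1)"
      using exists_dominant_term[OF _ _ transversal_terms_distinct[OF f c]] by blast
    then show False
      using v_sum_dominant[of "{..<p ^ n}" j0 "\<lambda>j. c j * f j"] sum0 by auto
  qed
qed

lemma transversal_expansion:
  assumes f: "valuation_transversal f" and x: "x \<noteq> 0"
  obtains c j0 where "\<forall>j<p ^ n. c j \<in> K" "x = (\<Sum>j<p ^ n. c j * f j)"
    "j0 < p ^ n" "c j0 \<noteq> 0" "v (c j0 * f j0) = v x"
    "\<forall>j\<in>{..<p ^ n} - {j0}. vge v (c j * f j) (v x + 1)"
proof -
  obtain c where c: "\<forall>j<p ^ n. c j \<in> K" and xc: "x = (\<Sum>j<p ^ n. c j * f j)"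
    using independent_imp_spanning[OF subfield_K has_basis transversal_independent[OF f]]
    unfolding K_spanning_def by blast
  have "\<exists>j\<in>{..<p ^ n}. c j * f j \<noteq> 0"
  proof (rule ccontr)
    assume "\<not> (\<exists>j\<in>{..<p ^ n}. c j * f j \<noteq> 0)"
    then have "(\<Sum>j<p ^ n. c j * f j) = 0"
      by (intro sum.neutral) blast
    then show False
      using x xc by simp
  qed
  then obtain j0 where j0: "j0 \<in> {..<p ^ n}" "c j0 * f j0 \<noteq> 0"
    and others: "\<forall>j\<in>{..<p ^ n} - {j0}. vge v (c j * f j) (v (c j0 * f j0) + 1)"
    using exists_dominant_term[OF _ _ transversal_terms_distinct[OF f c]] by blast
  have vx: "v x = v (c j0 * f j0)"
    using v_sum_dominant[of "{..<p ^ n}" j0 "\<lambda>j. c j * f j"] j0 others xc by simp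
  show thesis
  proof (rule that[OF c xc])
    show "j0 < p ^ n" "c j0 \<noteq> 0" "v (c j0 * f j0) = v x"
      using j0 vx by auto
    show "\<forall>j\<in>{..<p ^ n} - {j0}. vge v (c j * f j) (v x + 1)"
      using others vx by simp
  qed
qed

lemma transversal_expansion_vge:
  assumes f: "valuation_transversal f" and x: "x \<noteq> 0"
  obtains c where "\<forall>j<p ^ n. c j \<in> K" "x = (\<Sum>j<p ^ n. c j * f j)"
    "\<forall>j<p ^ n. vge v (c j * f j) (v x)"
proof -
  obtain c j0 where c: "\<forall>j<p ^ n. c j \<in> K" "x = (\<Sum>j<p ^ n. c j * f j)"
    and j0: "v (c j0 * f j0) = v x" and others: "\<forall>j\<in>{..<p ^ n} - {j0}. vge v (c j * f j) (v x + 1)"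
    by (rule transversal_expansion[OF f x])
  have "vge v (c j * f j) (v x)" if "j < p ^ n" for j
  proof (cases "j = j0")
    case False
    then have "vge v (c j * f j) (v x + 1)"
      using others that by simp
    then show ?thesis
      by (rule vge_mono) simp
  qed (use j0 vge_self[of "c j0 * f j0"] in simp)
  then show thesis
    using that c by blast
qed

lemma lambda_familyD: "lambda_family v K p n lam \<Longrightarrow> lam t \<noteq> 0 \<and> v (lam t) = t"
  unfolding lambda_family_def by blast

lemma transversal_lambda:
  assumes lam: "lambda_family v K p n lam"
  shows "valuation_transversal (\<lambda>j. lam (a + int j))"
proof -
  have "j = j'"
    if j: "j < p ^ n" "j' < p ^ n"
      and eq: "v (lam (a + int j)) mod int (p ^ n) = v (lam (a + int j')) mod int (p ^ n)" for j j'
  proof (rule ccontr)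
    assume "j \<noteq> j'"
    have "v (lam (a + int j)) = a + int j" "v (lam (a + int j')) = a + int j'"
      using lambda_familyD[OF lam] by blast+
    then have "(a + int j) mod int (p ^ n) = (a + int j') mod int (p ^ n)"
      using eq by simp
    then have "int (p ^ n) dvd int j - int j'"
      by (simp add: mod_eq_dvd_iff)
    then have "\<bar>int (p ^ n)\<bar> \<le> \<bar>int j - int j'\<bar>"
      using dvd_imp_le_int[of "int j - int j'" "int (p ^ n)"] \<open>j \<noteq> j'\<close> by simp
    then show False
      using j by linarith
  qed
  moreover have "lam (a + int j) \<noteq> 0" for j
    using lambda_familyD[OF lam] by blast
  ultimately show ?thesis
    unfolding valuation_transversal_def inj_on_def by blast
qed

lemma lambda_leading_term:
  assumes lam: "lambda_family v K p n lam" and y: "y \<noteq> 0"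
  obtains u where "u \<in> K" "u \<noteq> 0" "v u = 0" "vge v (y - u * lam (v y)) (v y + 1)"
proof -
  define f where "f j = lam (v y + int j)" for j
  obtain c j0 where c: "\<forall>j<p ^ n. c j \<in> K" and yc: "y = (\<Sum>j<p ^ n. c j * f j)"
    and j0: "j0 < p ^ n" "c j0 \<noteq> 0" "v (c j0 * f j0) = v y"
      "\<forall>j\<in>{..<p ^ n} - {j0}. vge v (c j * f j) (v y + 1)"
    using transversal_expansion[OF transversal_lambda[OF lam] y] unfolding f_def by blast
  have "v (c j0 * f j0) = v (c j0) + (v y + int j0)"
    using v_mult[OF j0(2)] lambda_familyD[OF lam] unfolding f_def by simp
  then have vc: "v (c j0) = - int j0"
    using j0(3) by simp
  have dvd: "int (p ^ n) dvd int j0"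
    using dvd_v_K[of "c j0"] c j0(1,2) vc by simp
  have "j0 = 0"
  proof (rule ccontr)
    assume "j0 \<noteq> 0"
    then have "\<bar>int (p ^ n)\<bar> \<le> \<bar>int j0\<bar>"
      using dvd_imp_le_int[of "int j0" "int (p ^ n)"] dvd by simp
    then show False
      using j0(1) by linarith
  qed
  have "(\<Sum>j<p ^ n. c j * f j) = c 0 * f 0 + (\<Sum>j\<in>{..<p ^ n} - {0}. c j * f j)"
    by (rule sum.remove) (use degree_pos in auto)
  then have "y = c 0 * lam (v y) + (\<Sum>j\<in>{..<p ^ n} - {0}. c j * f j)"
    unfolding yc[symmetric] by (simp add: f_def)
  then have "y - c 0 * lam (v y) = (\<Sum>j\<in>{..<p ^ n} - {0}. c j * f j)"
    by (metis add_diff_cancel_left')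
  moreover have "vge v (\<Sum>j\<in>{..<p ^ n} - {0}. c j * f j) (v y + 1)"
    using j0(4) unfolding \<open>j0 = 0\<close> by (intro vge_sum) auto
  moreover have "c 0 \<in> K" "c 0 \<noteq> 0" "v (c 0) = 0"
    using c degree_pos j0(2) vc unfolding \<open>j0 = 0\<close> by auto
  ultimately show thesis
    by (intro that) auto
qed

lemma lambda_family_rescale:
  assumes \<pi>: "\<pi> \<in> K" "\<pi> \<noteq> 0" "v \<pi> = int (p ^ n)"
    and \<beta>: "\<And>t. \<beta> t \<noteq> 0" "\<And>t. int (p ^ n) dvd v (\<beta> t) - t"
    and \<beta>_cong: "\<And>t1 t2. t1 mod int (p ^ n) = t2 mod int (p ^ n) \<Longrightarrow> \<beta> t1 = \<beta> t2"
  shows "lambda_family v K p n (\<lambda>t. \<pi> powi ((t - v (\<beta> t)) div int (p ^ n)) * \<beta> t)"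
  unfolding lambda_family_def
proof (intro conjI allI impI)
  fix t
  let ?k = "(t - v (\<beta> t)) div int (p ^ n)"
  have "int (p ^ n) dvd t - v (\<beta> t)"
    using \<beta>(2)[of t] by (simp add: dvd_diff_commute)
  then have "?k * int (p ^ n) = t - v (\<beta> t)"
    by (rule dvd_div_mult_self)
  moreover have "\<pi> powi ?k \<noteq> 0" "v (\<pi> powi ?k) = ?k * int (p ^ n)"
    using power_int_uniformizer[OF \<pi>] by blast+
  ultimately show "\<pi> powi ?k * \<beta> t \<noteq> 0" "v (\<pi> powi ?k * \<beta> t) = t"
    using \<beta>(1)[of t] v_mult by auto
next
  fix t1 t2 :: int
  let ?k1 = "(t1 - v (\<beta> t1)) div int (p ^ n)" and ?k2 = "(t2 - v (\<beta> t2)) div int (p ^ n)"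
  assume "t1 mod int (p ^ n) = t2 mod int (p ^ n)"
  then have "\<beta> t1 = \<beta> t2"
    by (rule \<beta>_cong)
  then have eq: "\<pi> powi ?k1 * \<beta> t1 * inverse (\<pi> powi ?k2 * \<beta> t2) = \<pi> powi ?k1 * inverse (\<pi> powi ?k2)"
    using \<beta>(1)[of t2] by simp
  have "\<pi> powi ?k1 * inverse (\<pi> powi ?k2) \<in> K"
    using power_int_uniformizer[OF \<pi>] K_mult K_inverse by blast
  then show "\<pi> powi ?k1 * \<beta> t1 * inverse (\<pi> powi ?k2 * \<beta> t2) \<in> K"
    unfolding eq .
qed

end

section \<open>Monomials in the \<open>\<Psi>\<^sub>i\<close> and scaffolds\<close>

lemma count_list_replicate: "count_list (replicate m a) x = (if a = x then m else 0)"
  by (induction m) auto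

lemma count_list_concat: "count_list (concat xss) x = sum_list (map (\<lambda>xs. count_list xs x) xss)"
  by (induction xss) auto

lemma count_list_filter: "count_list (filter P xs) x = (if P x then count_list xs x else 0)"
  by (induction xs) auto

lemma sum_count_list_Cons:
  fixes g :: "'a \<Rightarrow> 'b::comm_semiring_1"
  assumes "finite A" "a \<in> A"
  shows "(\<Sum>i\<in>A. of_nat (count_list (a # w) i) * g i) = (\<Sum>i\<in>A. of_nat (count_list w i) * g i) + g a"
proof -
  have "(\<Sum>i\<in>A. of_nat (count_list (a # w) i) * g i) =
      (\<Sum>i\<in>A. of_nat (count_list w i) * g i + (if a = i then g i else 0))"
    by (rule sum.cong) (simp_all add: ring_distribs add.commute)
  then show ?thesis
    using assms by (simp add: sum.distrib)
qed

definition digit_word :: "nat \<Rightarrow> nat \<Rightarrow> nat \<Rightarrow> nat list" where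
  "digit_word p n s = concat (map (\<lambda>i. replicate (digit p s (n - i)) i) [1..<n+1])"

definition digit_word_led_by :: "nat \<Rightarrow> nat \<Rightarrow> nat \<Rightarrow> nat \<Rightarrow> nat list" where
  "digit_word_led_by p n i s = replicate (digit p s (n - i)) i @ filter (\<lambda>j. j \<noteq> i) (digit_word p n s)"

lemma count_digit_word:
  "count_list (digit_word p n s) x = (if x \<in> {1..n} then digit p s (n - x) else 0)"
proof -
  have "count_list (digit_word p n s) x =
      sum_list (map (\<lambda>i. if i = x then digit p s (n - i) else 0) [1..<n+1])"
    unfolding digit_word_def count_list_concat by (simp add: comp_def count_list_replicate)
  also have "\<dots> = (\<Sum>i\<in>{1..n}. if i = x then digit p s (n - i) else 0)"
    by (simp add: sum_list_distinct_conv_sum_set atLeastLessThanSuc_atLeastAtMost)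
  finally show ?thesis by simp
qed

lemma count_digit_word_led_by:
  "i \<in> {1..n} \<Longrightarrow> count_list (digit_word_led_by p n i s) x = count_list (digit_word p n s) x"
  unfolding digit_word_led_by_def by (simp add: count_list_replicate count_list_filter count_digit_word)

lemma prod_list_map_count_eq:
  fixes f :: "nat \<Rightarrow> 'a::monoid_mult"
  assumes comm: "\<forall>x y :: 'a. x * y = y * x" and count: "\<forall>x. count_list W x = count_list W' x"
  shows "prod_list (map f W) = prod_list (map f W')"
  using count
proof (induction W arbitrary: W')
  case Nil
  then have "W' = []"
    by (metis count_list_0_iff count_list.simps(1) list.set_intros(1) neq_Nil_conv)
  then show ?case by simp
next
  case (Cons a W)
  have "a \<in> set W'"
    using Cons.prems[rule_format, of a] count_list_0_iff by force
  then obtain A B where W': "W' = A @ a # B"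
    by (meson split_list)
  have "\<forall>x. count_list W x = count_list (A @ B) x"
    using Cons.prems unfolding W' by (auto split: if_splits)
  then have "prod_list (map f W) = prod_list (map f A) * prod_list (map f B)"
    using Cons.IH[of "A @ B"] by simp
  moreover have "f a * prod_list (map f A) = prod_list (map f A) * f a"
    using comm by blast
  ultimately show ?case
    unfolding W' by (simp add: mult.assoc[symmetric])
qed

lemma cong_tol_one: "cong_tol v x y s 1 \<longleftrightarrow> vge v (x - y) (s + 1)"
  by (simp add: cong_tol_def one_enat_def)

lemma scaffoldI:
  assumes "1 \<le> T" "lambda_family v K p n lam" "C1 n act \<Psi>"
    and nonzero: "\<And>i t. i \<in> {1..n} \<Longrightarrow> 1 \<le> digit p (afun p n b t) (n - i) \<Longrightarrow>
      \<exists>u\<in>K. u \<noteq> 0 \<and> v u = 0 \<and> cong_tol v (act (\<Psi> i) (lam t))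
        (u * lam (t + int (p ^ (n - i)) * b i)) (t + int (p ^ (n - i)) * b i) T"
    and zero: "\<And>i t. i \<in> {1..n} \<Longrightarrow> digit p (afun p n b t) (n - i) = 0 \<Longrightarrow>
      cong_tol v (act (\<Psi> i) (lam t)) 0 (t + int (p ^ (n - i)) * b i) T"
  shows "scaffold v K act p n b \<Psi> lam T"
  using assms unfolding scaffold_def C1_def Let_def by (auto simp: not_less_eq_eq)

lemma cong_tol_imp_vge:
  assumes "1 \<le> T" "cong_tol v x y s T"
  shows "vge v (x - y) (s + 1)"
proof (cases T)
  case (enat m)
  then have "1 \<le> m" "vge v (x - y) (s + int m)"
    using assms by (simp_all add: one_enat_def cong_tol_def)
  then show ?thesis
    by (auto simp: vge_def)
qed (use assms in \<open>simp add: cong_tol_def vge_def\<close>)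

locale scaffold_setting = totally_ramified_extension v K p n + shift_parameters p n b
  for v :: "'l::field \<Rightarrow> int" and K p n b +
  fixes \<iota> :: "'l \<Rightarrow> 'a::ring_1" and act :: "'a \<Rightarrow> 'l \<Rightarrow> 'l" and \<Psi> :: "nat \<Rightarrow> 'a"
  assumes algebra_action: "K_algebra_acting K \<iota> act (p ^ n)"
begin

lemma act_add_left: "act (a + c) z = act a z + act c z"
  and act_add_right: "act a (z + w) = act a z + act a w"
  and act_mult: "act (a * c) z = act a (act c z)"
  and act_one: "act 1 z = z"
  and act_smult: "k \<in> K \<Longrightarrow> act a (k * z) = k * act a z"
  using algebra_action unfolding K_algebra_acting_def by auto

lemma act_zero_right: "act a 0 = 0"
  using act_add_right[of a 0 0] by (metis add.right_neutral add_left_cancel)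

lemma act_zero_left: "act 0 z = 0"
  using act_add_left[of 0 0 z] by (metis add.right_neutral add_left_cancel)

lemma act_K_linear_sum:
  assumes "\<forall>j\<in>S. c j \<in> K"
  shows "act a (\<Sum>j\<in>S. c j * f j) = (\<Sum>j\<in>S. c j * act a (f j))"
proof (cases "finite S")
  case True
  then show ?thesis
    using assms by (induction S rule: finite_induct) (auto simp: act_zero_right act_add_right act_smult)
qed (simp add: act_zero_right)

definition Psi_word :: "nat list \<Rightarrow> 'a" where
  "Psi_word w = prod_list (map \<Psi> w)"

lemma Psi_word_Cons: "Psi_word (i # w) = \<Psi> i * Psi_word w"
  by (simp add: Psi_word_def)

lemma Psi_word_led_by: "Psi_word (digit_word_led_by p n i s) =
    \<Psi> i ^ digit p s (n - i) * Psi_word (filter (\<lambda>j. j \<noteq> i) (digit_word p n s))"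
  by (simp add: Psi_word_def digit_word_led_by_def)

lemma C2_wordD:
  assumes "C2 v p n b act \<Psi> \<rho>" "s < p ^ n" and count: "\<forall>x. count_list w x = count_list (digit_word p n s) x"
  shows "act (Psi_word w) \<rho> \<noteq> 0 \<and> v (act (Psi_word w) \<rho>) = v \<rho> + bfun p n b s"
proof -
  have "set w \<subseteq> {1..n}"
    using count count_digit_word count_list_0_iff by (metis subsetI)
  then have "Psi_word w \<in> Upsilon p n \<Psi> s"
    using count count_digit_word unfolding Upsilon_def Psi_word_def by auto
  then show ?thesis
    using assms(1,2) unfolding C2_def by blast
qed

section \<open>From (C1)--(C3) to a scaffold of tolerance 1\<close>

lemma Psi_word_raise:
  assumes C2: "C2 v p n b act \<Psi> \<rho>" and i: "i \<in> {1..n}" and s: "s < p ^ n"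
    and d: "digit p s (n - i) < p - 1"
  shows "act (\<Psi> i) (act (Psi_word (digit_word_led_by p n i s)) \<rho>) \<noteq> 0 \<and>
    v (act (\<Psi> i) (act (Psi_word (digit_word_led_by p n i s)) \<rho>)) =
      v \<rho> + bfun p n b s + int (p ^ (n - i)) * b i"
proof -
  let ?d = "digit p s (n - i)"
  obtain s' where s': "s' < p ^ n"
    and ds': "\<forall>j<n. digit p s' j = (if j = n - i then ?d + 1 else digit p s j)"
    using exists_digits[OF p_gt_1, of n "\<lambda>j. if j = n - i then ?d + 1 else digit p s j"]
      d digit_less p_gt_1 by force
  have "\<forall>x. count_list (i # digit_word_led_by p n i s) x = count_list (digit_word p n s') x"
    using i digit_update_at[OF i _ ds'] by (auto simp: count_digit_word_led_by count_digit_word)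
  from C2_wordD[OF C2 s' this]
  have "act (\<Psi> i) (act (Psi_word (digit_word_led_by p n i s)) \<rho>) \<noteq> 0 \<and>
      v (act (\<Psi> i) (act (Psi_word (digit_word_led_by p n i s)) \<rho>)) = v \<rho> + bfun p n b s'"
    by (simp add: Psi_word_Cons act_mult)
  moreover have "bfun p n b s' = bfun p n b s + int (p ^ (n - i)) * b i"
    using bfun_digit_update[OF i ds'] by simp
  ultimately show ?thesis
    by simp
qed

lemma Psi_word_overflow:
  assumes C2: "C2 v p n b act \<Psi> \<rho>" and C3: "C3 v p n b act \<Psi>" and i: "i \<in> {1..n}"
    and s: "s < p ^ n" and d: "digit p s (n - i) = p - 1"
  shows "vge v (act (\<Psi> i) (act (Psi_word (digit_word_led_by p n i s)) \<rho>))
    (v \<rho> + bfun p n b s + int (p ^ (n - i)) * b i + 1)"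
proof -
  let ?w = "filter (\<lambda>j. j \<noteq> i) (digit_word p n s)"
  obtain s' where s': "s' < p ^ n" and ds': "\<forall>j<n. digit p s' j = (if j = n - i then 0 else digit p s j)"
    using exists_digits[OF p_gt_1, of n "\<lambda>j. if j = n - i then 0 else digit p s j"]
      digit_less p_gt_1 by force
  have "\<forall>x. count_list ?w x = count_list (digit_word p n s') x"
    using digit_update_at[OF i _ ds'] by (auto simp: count_list_filter count_digit_word)
  then have w: "act (Psi_word ?w) \<rho> \<noteq> 0" "v (act (Psi_word ?w) \<rho>) = v \<rho> + bfun p n b s'"
    using C2_wordD[OF C2 s'] by auto
  have "\<Psi> i * Psi_word (digit_word_led_by p n i s) = \<Psi> i ^ p * Psi_word ?w"
    using Psi_word_led_by d p_gt_1 by (simp add: mult.assoc[symmetric] power_Suc[symmetric])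
  then have "act (\<Psi> i) (act (Psi_word (digit_word_led_by p n i s)) \<rho>) = act (\<Psi> i ^ p) (act (Psi_word ?w) \<rho>)"
    by (simp flip: act_mult)
  moreover have "vge v (act (\<Psi> i ^ p) (act (Psi_word ?w) \<rho>))
      (v (act (Psi_word ?w) \<rho>) + b i * int (p ^ (n - i + 1)) + 1)"
    using C3 i w(1) unfolding C3_def by blast
  moreover have "v (act (Psi_word ?w) \<rho>) + b i * int (p ^ (n - i + 1)) =
      v \<rho> + bfun p n b s + int (p ^ (n - i)) * b i"
    using w(2) bfun_digit_update[OF i ds'] d p_gt_1 by (simp add: of_nat_diff algebra_simps)
  ultimately show ?thesis
    by simp
qed

definition Psi_monomial :: "'l \<Rightarrow> nat \<Rightarrow> nat \<Rightarrow> 'l" where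
  "Psi_monomial \<rho> i s = act (Psi_word (digit_word_led_by p n i s)) \<rho>"

lemma Psi_monomial_valuation:
  assumes "C2 v p n b act \<Psi> \<rho>" "i \<in> {1..n}" "s < p ^ n"
  shows "Psi_monomial \<rho> i s \<noteq> 0 \<and> v (Psi_monomial \<rho> i s) = v \<rho> + bfun p n b s"
  unfolding Psi_monomial_def using C2_wordD[OF assms(1,3)] count_digit_word_led_by[OF assms(2)] by blast

lemma transversal_Psi_monomial:
  assumes C2: "C2 v p n b act \<Psi> \<rho>" and i: "i \<in> {1..n}"
  shows "valuation_transversal (Psi_monomial \<rho> i)"
  unfolding valuation_transversal_def inj_on_def
proof (intro conjI allI impI ballI)
  fix s s' assume s: "s \<in> {..<p ^ n}" "s' \<in> {..<p ^ n}"
    and "v (Psi_monomial \<rho> i s) mod int (p ^ n) = v (Psi_monomial \<rho> i s') mod int (p ^ n)"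
  then have "(bfun p n b s + v \<rho>) mod int (p ^ n) = (bfun p n b s' + v \<rho>) mod int (p ^ n)"
    using Psi_monomial_valuation[OF C2 i] by (simp add: add.commute)
  then have "bfun p n b s mod int (p ^ n) = bfun p n b s' mod int (p ^ n)"
    by (simp add: mod_eq_dvd_iff)
  then show "s = s'"
    using bfun_mod_inj s by simp
qed (use Psi_monomial_valuation[OF C2 i] in simp)

lemma Psi_monomial_vge:
  assumes C2: "C2 v p n b act \<Psi> \<rho>" and C3: "C3 v p n b act \<Psi>" and i: "i \<in> {1..n}" and s: "s < p ^ n"
  shows "vge v (act (\<Psi> i) (Psi_monomial \<rho> i s)) (v \<rho> + bfun p n b s + int (p ^ (n - i)) * b i)"
proof (cases "digit p s (n - i) < p - 1")
  case True
  then show ?thesis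
    using Psi_word_raise[OF C2 i s] unfolding Psi_monomial_def by (simp add: vge_def)
next
  case False
  moreover have "digit p s (n - i) < p"
    using digit_less p_gt_1 by simp
  ultimately have "digit p s (n - i) = p - 1"
    by linarith
  then show ?thesis
    using Psi_word_overflow[OF C2 C3 i s] vge_mono unfolding Psi_monomial_def by fastforce
qed

lemma afun_K_multiple:
  assumes "c \<in> K" "c \<noteq> 0" "s < p ^ n" "v c + r + bfun p n b s = y"
  shows "afun p n b (r - y) = s"
proof -
  have "bfun p n b s + (r - y) = - v c"
    using assms(4) by simp
  moreover have "int (p ^ n) dvd v c"
    using dvd_v_K assms(1,2) by simp
  ultimately show ?thesis
    using afun_eq_iff_bfun_dvd[OF assms(3)] by simp
qed

text \<open>Expanding \<open>x\<close> in the basis \<open>\<Psi>\<^sup>(\<^sup>s\<^sup>)\<rho>\<close>, the dominant term is the one with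
  \<open>s = \<a>(v \<rho> - v x)\<close>, because the coefficients have valuations in \<open>p^n \<int>\<close>.\<close>

lemma Psi_action_split:
  assumes C2: "C2 v p n b act \<Psi> \<rho>" and C3: "C3 v p n b act \<Psi>" and i: "i \<in> {1..n}" and x: "x \<noteq> 0"
  defines "s0 \<equiv> afun p n b (v \<rho> - v x)"
  obtains c R where "c \<in> K" "c \<noteq> 0" "v c + v \<rho> + bfun p n b s0 = v x"
    "act (\<Psi> i) x = c * act (\<Psi> i) (Psi_monomial \<rho> i s0) + R"
    "vge v R (v x + int (p ^ (n - i)) * b i + 1)"
proof -
  let ?f = "Psi_monomial \<rho> i"
  let ?sh = "int (p ^ (n - i)) * b i"
  obtain c j0 where c: "\<forall>j<p ^ n. c j \<in> K" and xc: "x = (\<Sum>j<p ^ n. c j * ?f j)"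
    and j0: "j0 < p ^ n" "c j0 \<noteq> 0" "v (c j0 * ?f j0) = v x"
    and others: "\<forall>j\<in>{..<p ^ n} - {j0}. vge v (c j * ?f j) (v x + 1)"
    using transversal_expansion[OF transversal_Psi_monomial[OF C2 i] x] by blast
  have vc: "v (c j0) + v \<rho> + bfun p n b j0 = v x"
    using j0 v_mult Psi_monomial_valuation[OF C2 i j0(1)] by simp
  then have "s0 = j0"
    unfolding s0_def using afun_K_multiple c j0 by blast
  define R where "R = (\<Sum>j\<in>{..<p ^ n} - {j0}. c j * act (\<Psi> i) (?f j))"
  have "act (\<Psi> i) x = (\<Sum>j<p ^ n. c j * act (\<Psi> i) (?f j))"
    unfolding xc using c by (intro act_K_linear_sum) simp
  also have "\<dots> = c j0 * act (\<Psi> i) (?f j0) + R"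
    unfolding R_def using j0(1) by (intro sum.remove) auto
  finally have split: "act (\<Psi> i) x = c j0 * act (\<Psi> i) (?f j0) + R" .
  have "vge v (c j * act (\<Psi> i) (?f j)) (v x + ?sh + 1)" if j: "j \<in> {..<p ^ n} - {j0}" for j
  proof (cases "c j = 0")
    case False
    have "v x + 1 \<le> v (c j * ?f j)"
      using others j False Psi_monomial_valuation[OF C2 i] by (auto simp: vge_def)
    then have "v x + 1 \<le> v (c j) + v \<rho> + bfun p n b j"
      using v_mult False Psi_monomial_valuation[OF C2 i] j by auto
    moreover have "vge v (c j * act (\<Psi> i) (?f j)) (v (c j) + (v \<rho> + bfun p n b j + ?sh))"
      using vge_mult[OF Psi_monomial_vge[OF C2 C3 i] False] j by auto
    ultimately show ?thesis
      by (rule_tac vge_mono) auto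
  qed simp
  then have "vge v R (v x + ?sh + 1)"
    unfolding R_def by (intro vge_sum) auto
  then show thesis
    using c j0 vc split by (intro that[of "c j0" R]) (simp_all add: \<open>s0 = j0\<close>)
qed

lemma Psi_valuation_eq_of_C2:
  assumes C2: "C2 v p n b act \<Psi> \<rho>" and C3: "C3 v p n b act \<Psi>" and i: "i \<in> {1..n}" and x: "x \<noteq> 0"
    and d: "digit p (afun p n b (v \<rho> - v x)) (n - i) < p - 1"
  shows "act (\<Psi> i) x \<noteq> 0 \<and> v (act (\<Psi> i) x) = v x + int (p ^ (n - i)) * b i"
proof -
  let ?s0 = "afun p n b (v \<rho> - v x)"
  obtain c R where c: "c \<in> K" "c \<noteq> 0" "v c + v \<rho> + bfun p n b ?s0 = v x"
    and split: "act (\<Psi> i) x = c * act (\<Psi> i) (Psi_monomial \<rho> i ?s0) + R"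
    and R: "vge v R (v x + int (p ^ (n - i)) * b i + 1)"
    using Psi_action_split[OF C2 C3 i x] by blast
  have "act (\<Psi> i) (Psi_monomial \<rho> i ?s0) \<noteq> 0"
    "v (act (\<Psi> i) (Psi_monomial \<rho> i ?s0)) = v \<rho> + bfun p n b ?s0 + int (p ^ (n - i)) * b i"
    using Psi_word_raise[OF C2 i afun_less d] unfolding Psi_monomial_def by auto
  then have "c * act (\<Psi> i) (Psi_monomial \<rho> i ?s0) \<noteq> 0"
    "v (c * act (\<Psi> i) (Psi_monomial \<rho> i ?s0)) = v x + int (p ^ (n - i)) * b i"
    using c v_mult by auto
  then show ?thesis
    using v_add_dominant R split by simp
qed

lemma Psi_valuation_gt_of_C2:
  assumes C2: "C2 v p n b act \<Psi> \<rho>" and C3: "C3 v p n b act \<Psi>" and i: "i \<in> {1..n}" and x: "x \<noteq> 0"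
    and d: "digit p (afun p n b (v \<rho> - v x)) (n - i) = p - 1"
  shows "vge v (act (\<Psi> i) x) (v x + int (p ^ (n - i)) * b i + 1)"
proof -
  let ?s0 = "afun p n b (v \<rho> - v x)"
  obtain c R where c: "c \<in> K" "c \<noteq> 0" "v c + v \<rho> + bfun p n b ?s0 = v x"
    and split: "act (\<Psi> i) x = c * act (\<Psi> i) (Psi_monomial \<rho> i ?s0) + R"
    and R: "vge v R (v x + int (p ^ (n - i)) * b i + 1)"
    using Psi_action_split[OF C2 C3 i x] by blast
  have "vge v (act (\<Psi> i) (Psi_monomial \<rho> i ?s0)) (v \<rho> + bfun p n b ?s0 + int (p ^ (n - i)) * b i + 1)"
    using Psi_word_overflow[OF C2 C3 i afun_less d] unfolding Psi_monomial_def .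
  moreover have "v x + int (p ^ (n - i)) * b i + 1 \<le>
      v c + (v \<rho> + bfun p n b ?s0 + int (p ^ (n - i)) * b i + 1)"
    using c(3) by simp
  ultimately have "vge v (c * act (\<Psi> i) (Psi_monomial \<rho> i ?s0)) (v x + int (p ^ (n - i)) * b i + 1)"
    using vge_mult[OF _ c(2)] vge_mono by blast
  then show ?thesis
    using vge_add R split by simp
qed

lemma afun_top_of_conditions:
  assumes C1: "C1 n act \<Psi>" and C2: "C2 v p n b act \<Psi> \<rho>" and C3: "C3 v p n b act \<Psi>"
  shows "afun p n b (v \<rho>) = p ^ n - 1"
  unfolding eq_top_iff_digits[OF p_gt_1 afun_less]
proof (intro allI impI)
  fix j assume j: "j < n"
  define i where "i = n - j"
  have i: "i \<in> {1..n}" "n - i = j"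
    using j unfolding i_def by auto
  have "act (\<Psi> i) 1 = 0"
    using C1 i unfolding C1_def by blast
  then have "\<not> digit p (afun p n b (v \<rho> - v 1)) (n - i) < p - 1"
    using Psi_valuation_eq_of_C2[OF C2 C3 i(1), of 1] by auto
  moreover have "digit p (afun p n b (v \<rho>)) j < p"
    using digit_less p_gt_1 by simp
  ultimately show "digit p (afun p n b (v \<rho>)) j = p - 1"
    using i v_one by simp
qed

theorem scaffold_of_conditions:
  assumes lam: "lambda_family v K p n lam" and C1: "C1 n act \<Psi>" and C2: "C2 v p n b act \<Psi> \<rho>"
    and C3: "C3 v p n b act \<Psi>"
  shows "scaffold v K act p n b \<Psi> lam 1"
proof -
  let ?sh = "\<lambda>i. int (p ^ (n - i)) * b i"
  have top: "afun p n b (v \<rho>) = p ^ n - 1"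
    by (rule afun_top_of_conditions[OF C1 C2 C3])
  have complement: "digit p (afun p n b (v \<rho> - v (lam t))) (n - i) = p - 1 - digit p (afun p n b t) (n - i)"
    if "i \<in> {1..n}" for i t
    using digit_afun_complement[OF top] that lambda_familyD[OF lam] by simp
  show ?thesis
  proof (rule scaffoldI[OF _ lam C1])
    fix i t assume i: "i \<in> {1..n}" and d: "1 \<le> digit p (afun p n b t) (n - i)"
    have "digit p (afun p n b t) (n - i) < p"
      using digit_less p_gt_1 by simp
    then have "act (\<Psi> i) (lam t) \<noteq> 0 \<and> v (act (\<Psi> i) (lam t)) = t + ?sh i"
      using Psi_valuation_eq_of_C2[OF C2 C3 i] complement[OF i] d lambda_familyD[OF lam] by auto
    then obtain u where "u \<in> K" "u \<noteq> 0" "v u = 0"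
      "vge v (act (\<Psi> i) (lam t) - u * lam (t + ?sh i)) (t + ?sh i + 1)"
      using lambda_leading_term[OF lam, of "act (\<Psi> i) (lam t)"] by auto
    then show "\<exists>u\<in>K. u \<noteq> 0 \<and> v u = 0 \<and>
        cong_tol v (act (\<Psi> i) (lam t)) (u * lam (t + ?sh i)) (t + ?sh i) 1"
      by (auto simp: cong_tol_one)
  next
    fix i t assume i: "i \<in> {1..n}" and "digit p (afun p n b t) (n - i) = 0"
    then have "digit p (afun p n b (v \<rho> - v (lam t))) (n - i) = p - 1"
      using complement[OF i] by simp
    from Psi_valuation_gt_of_C2[OF C2 C3 i _ this]
    have "vge v (act (\<Psi> i) (lam t)) (t + ?sh i + 1)"
      using lambda_familyD[OF lam] by simp
    then show "cong_tol v (act (\<Psi> i) (lam t)) 0 (t + ?sh i) 1"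
      by (simp add: cong_tol_one)
  qed simp
qed

section \<open>Tolerance \<open>\<infinity>\<close>\<close>

text \<open>The elements \<open>\<beta>\<^sub>t = \<Psi>\<^sup>(\<^sup>\<sigma>\<^sup>)\<rho>\<close> with \<open>\<sigma> = \<a>(v \<rho> - t)\<close>, the digit-wise complement of \<open>\<a>(t)\<close>:
  when the \<open>\<Psi>\<^sub>i\<close> commute, \<open>\<Psi>\<^sub>i\<close> raises the digit \<open>\<sigma>\<^sub>(\<^sub>n\<^sub>-\<^sub>i\<^sub>)\<close> by one, and by (C4) it kills \<open>\<beta>\<^sub>t\<close> once that
  digit is \<open>p - 1\<close>.\<close>

definition complement_monomial :: "'l \<Rightarrow> int \<Rightarrow> 'l" where
  "complement_monomial \<rho> t = act (Psi_word (digit_word p n (afun p n b (v \<rho> - t)))) \<rho>"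

lemma complement_monomial_valuation:
  assumes "C2 v p n b act \<Psi> \<rho>"
  shows "complement_monomial \<rho> t \<noteq> 0 \<and> v (complement_monomial \<rho> t) = v \<rho> + bfun p n b (afun p n b (v \<rho> - t))"
  unfolding complement_monomial_def using C2_wordD[OF assms afun_less] by blast

lemma complement_monomial_dvd:
  assumes "C2 v p n b act \<Psi> \<rho>"
  shows "int (p ^ n) dvd v (complement_monomial \<rho> t) - t"
  using bfun_afun_dvd[of "v \<rho> - t"] complement_monomial_valuation[OF assms] by (simp add: algebra_simps)

lemma complement_monomial_cong:
  "t1 mod int (p ^ n) = t2 mod int (p ^ n) \<Longrightarrow> complement_monomial \<rho> t1 = complement_monomial \<rho> t2"
  unfolding complement_monomial_def using afun_cong mod_diff_cong by metis

lemma Psi_complement_monomial_shift: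
  assumes comm: "\<forall>x y :: 'a. x * y = y * x" and top: "afun p n b (v \<rho>) = p ^ n - 1"
    and i: "i \<in> {1..n}" and d: "1 \<le> digit p (afun p n b t) (n - i)"
  shows "act (\<Psi> i) (complement_monomial \<rho> t) = complement_monomial \<rho> (t + int (p ^ (n - i)) * b i)"
proof -
  have "\<forall>x. count_list (i # digit_word p n (afun p n b (v \<rho> - t))) x =
      count_list (digit_word p n (afun p n b (v \<rho> - (t + int (p ^ (n - i)) * b i)))) x"
    using i digit_update_at[OF i _ digit_afun_complement_shift[OF top i d]] by (auto simp: count_digit_word)
  from prod_list_map_count_eq[OF comm this, of \<Psi>]
  have "\<Psi> i * Psi_word (digit_word p n (afun p n b (v \<rho> - t))) =
      Psi_word (digit_word p n (afun p n b (v \<rho> - (t + int (p ^ (n - i)) * b i))))"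
    by (simp add: Psi_word_def)
  then show ?thesis
    unfolding complement_monomial_def by (simp flip: act_mult)
qed

lemma Psi_complement_monomial_zero:
  assumes comm: "\<forall>x y :: 'a. x * y = y * x" and C4: "C4 p n \<Psi>" and top: "afun p n b (v \<rho>) = p ^ n - 1"
    and i: "i \<in> {1..n}" and d: "digit p (afun p n b t) (n - i) = 0"
  shows "act (\<Psi> i) (complement_monomial \<rho> t) = 0"
proof -
  let ?w = "digit_word p n (afun p n b (v \<rho> - t))"
  have "digit p (afun p n b (v \<rho> - t)) (n - i) = p - 1"
    using digit_afun_complement[OF top] i d by simp
  then have "\<forall>x. count_list (i # ?w) x = count_list (replicate p i @ filter (\<lambda>j. j \<noteq> i) ?w) x"
    using i p_gt_1 by (auto simp: count_list_replicate count_list_filter count_digit_word)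
  from prod_list_map_count_eq[OF comm this, of \<Psi>]
  have "\<Psi> i * Psi_word ?w = \<Psi> i ^ p * Psi_word (filter (\<lambda>j. j \<noteq> i) ?w)"
    by (simp add: Psi_word_def)
  also have "\<dots> = 0"
    using C4 i unfolding C4_def by simp
  finally show ?thesis
    unfolding complement_monomial_def by (simp flip: act_mult add: act_zero_left)
qed

theorem exact_scaffold_of_conditions:
  assumes C1: "C1 n act \<Psi>" and C2: "C2 v p n b act \<Psi> \<rho>" and C3: "C3 v p n b act \<Psi>"
    and C4: "C4 p n \<Psi>" and comm: "\<forall>x y :: 'a. x * y = y * x"
  shows "\<exists>lam. scaffold v K act p n b \<Psi> lam \<infinity>"
proof -
  have top: "afun p n b (v \<rho>) = p ^ n - 1"
    by (rule afun_top_of_conditions[OF C1 C2 C3])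
  obtain \<pi> where \<pi>: "\<pi> \<in> K" "\<pi> \<noteq> 0" "v \<pi> = int (p ^ n)"
    using exists_uniformizer by blast
  let ?\<beta> = "complement_monomial \<rho>"
  let ?k = "\<lambda>t. (t - v (?\<beta> t)) div int (p ^ n)"
  define lam where "lam t = \<pi> powi ?k t * ?\<beta> t" for t
  have lam: "lambda_family v K p n lam"
    unfolding lam_def
  proof (rule lambda_family_rescale[OF \<pi>])
    show "?\<beta> t \<noteq> 0" "int (p ^ n) dvd v (?\<beta> t) - t" for t
      using complement_monomial_valuation[OF C2] complement_monomial_dvd[OF C2] by blast+
  qed (rule complement_monomial_cong)
  have act_lam: "act (\<Psi> i) (lam t) = \<pi> powi ?k t * act (\<Psi> i) (?\<beta> t)" for i t
    unfolding lam_def using act_smult power_int_uniformizer[OF \<pi>] by blast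
  have "act (\<Psi> i) (lam t) = lam (t + int (p ^ (n - i)) * b i)"
    if i: "i \<in> {1..n}" and d: "1 \<le> digit p (afun p n b t) (n - i)" for i t
  proof -
    let ?t' = "t + int (p ^ (n - i)) * b i"
    have "v (?\<beta> ?t') = v (?\<beta> t) + int (p ^ (n - i)) * b i"
      using complement_monomial_valuation[OF C2] bfun_afun_complement_shift[OF top i d] by simp
    then have "?k ?t' = ?k t"
      by simp
    then show ?thesis
      unfolding act_lam Psi_complement_monomial_shift[OF comm top i d] by (simp add: lam_def)
  qed
  moreover have "act (\<Psi> i) (lam t) = 0"
    if i: "i \<in> {1..n}" and d: "digit p (afun p n b t) (n - i) = 0" for i t
    unfolding act_lam Psi_complement_monomial_zero[OF comm C4 top i d] by simp
  ultimately have "scaffold v K act p n b \<Psi> lam \<infinity>"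
    using K_one v_one by (intro scaffoldI[OF _ lam C1]) (auto simp: cong_tol_def intro!: bexI[of _ 1])
  then show ?thesis by blast
qed

section \<open>From a scaffold back to (C1)--(C3)\<close>

lemma scaffold_lambda_valuation:
  assumes sc: "scaffold v K act p n b \<Psi> lam T" and i: "i \<in> {1..n}"
  shows "1 \<le> digit p (afun p n b t) (n - i) \<Longrightarrow>
      act (\<Psi> i) (lam t) \<noteq> 0 \<and> v (act (\<Psi> i) (lam t)) = t + int (p ^ (n - i)) * b i"
    and "digit p (afun p n b t) (n - i) = 0 \<Longrightarrow>
      vge v (act (\<Psi> i) (lam t)) (t + int (p ^ (n - i)) * b i + 1)"
proof -
  let ?s = "t + int (p ^ (n - i)) * b i"
  have T: "1 \<le> T" and lam: "lambda_family v K p n lam"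
    using sc unfolding scaffold_def by blast+
  have cases: "if 1 \<le> digit p (afun p n b t) (n - i)
      then (\<exists>u\<in>K. u \<noteq> 0 \<and> v u = 0 \<and> cong_tol v (act (\<Psi> i) (lam t)) (u * lam ?s) ?s T)
      else cong_tol v (act (\<Psi> i) (lam t)) 0 ?s T"
    using sc i unfolding scaffold_def Let_def by blast
  show "act (\<Psi> i) (lam t) \<noteq> 0 \<and> v (act (\<Psi> i) (lam t)) = ?s"
    if "1 \<le> digit p (afun p n b t) (n - i)"
  proof -
    have "\<exists>u\<in>K. u \<noteq> 0 \<and> v u = 0 \<and> cong_tol v (act (\<Psi> i) (lam t)) (u * lam ?s) ?s T"
      using cases that by simp
    then obtain u where u: "u \<in> K" "u \<noteq> 0" "v u = 0" "cong_tol v (act (\<Psi> i) (lam t)) (u * lam ?s) ?s T"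
      by blast
    have "u * lam ?s \<noteq> 0" "v (u * lam ?s) = ?s"
      using u lambda_familyD[OF lam] v_mult by auto
    with v_add_dominant cong_tol_imp_vge[OF T u(4)]
    have "u * lam ?s + (act (\<Psi> i) (lam t) - u * lam ?s) \<noteq> 0 \<and>
        v (u * lam ?s + (act (\<Psi> i) (lam t) - u * lam ?s)) = ?s"
      by metis
    then show ?thesis
      by simp
  qed
  show "vge v (act (\<Psi> i) (lam t)) (?s + 1)" if "digit p (afun p n b t) (n - i) = 0"
  proof -
    have "cong_tol v (act (\<Psi> i) (lam t)) 0 ?s T"
      using cases that by simp
    from cong_tol_imp_vge[OF T this] show ?thesis
      by simp
  qed
qed

lemma scaffold_lambda_vge:
  assumes sc: "scaffold v K act p n b \<Psi> lam T" and i: "i \<in> {1..n}"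
  shows "vge v (act (\<Psi> i) (lam t)) (t + int (p ^ (n - i)) * b i)"
proof (cases "digit p (afun p n b t) (n - i) = 0")
  case True
  then show ?thesis
    using vge_mono[OF scaffold_lambda_valuation(2)[OF sc i True]] by simp
next
  case False
  then show ?thesis
    using scaffold_lambda_valuation(1)[OF sc i] by (simp add: vge_def)
qed

lemma scaffold_Psi_vge:
  assumes sc: "scaffold v K act p n b \<Psi> lam T" and i: "i \<in> {1..n}" and x: "x \<noteq> 0"
  shows "vge v (act (\<Psi> i) x) (v x + int (p ^ (n - i)) * b i)"
proof -
  let ?sh = "int (p ^ (n - i)) * b i"
  have lam: "lambda_family v K p n lam"
    using sc unfolding scaffold_def by blast
  define f where "f = (\<lambda>j. lam (v x + int j))"
  have "valuation_transversal f"
    unfolding f_def by (rule transversal_lambda[OF lam])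
  then obtain c where c: "\<forall>j<p ^ n. c j \<in> K" and xc: "x = (\<Sum>j<p ^ n. c j * f j)"
    and terms: "\<forall>j<p ^ n. vge v (c j * f j) (v x)"
    by (rule transversal_expansion_vge[OF _ x])
  have "vge v (c j * act (\<Psi> i) (f j)) (v x + ?sh)" if j: "j < p ^ n" for j
  proof (cases "c j = 0")
    case False
    have "f j \<noteq> 0" "v (f j) = v x + int j"
      using lambda_familyD[OF lam] unfolding f_def by blast+
    then have "c j * f j \<noteq> 0" "v (c j * f j) = v (c j) + (v x + int j)"
      using False v_mult[OF False] by simp_all
    moreover have "vge v (c j * f j) (v x)"
      using terms j by blast
    ultimately have "v x \<le> v (c j) + (v x + int j)"
      unfolding vge_def by simp
    then have "v x + ?sh \<le> v (c j) + (v x + int j + ?sh)"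
      by simp
    from vge_mono[OF vge_mult[OF scaffold_lambda_vge[OF sc i] False] this] show ?thesis
      unfolding f_def .
  qed simp
  then have "vge v (\<Sum>j<p ^ n. c j * act (\<Psi> i) (f j)) (v x + ?sh)"
    by (intro vge_sum) auto
  moreover have "act (\<Psi> i) x = (\<Sum>j<p ^ n. c j * act (\<Psi> i) (f j))"
    unfolding xc using c by (intro act_K_linear_sum) simp
  ultimately show ?thesis
    by simp
qed

lemma scaffold_Psi_split:
  assumes sc: "scaffold v K act p n b \<Psi> lam T" and i: "i \<in> {1..n}" and x: "x \<noteq> 0"
  obtains u e where "u \<in> K" "u \<noteq> 0" "v u = 0" "act (\<Psi> i) x = u * act (\<Psi> i) (lam (v x)) + e"
    "vge v e (v x + int (p ^ (n - i)) * b i + 1)"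
proof -
  have lam: "lambda_family v K p n lam"
    using sc unfolding scaffold_def by blast
  obtain u where u: "u \<in> K" "u \<noteq> 0" "v u = 0" "vge v (x - u * lam (v x)) (v x + 1)"
    using lambda_leading_term[OF lam x] by blast
  define r where "r = x - u * lam (v x)"
  have "act (\<Psi> i) x = act (\<Psi> i) (u * lam (v x)) + act (\<Psi> i) r"
    unfolding r_def by (simp flip: act_add_right)
  then have split: "act (\<Psi> i) x = u * act (\<Psi> i) (lam (v x)) + act (\<Psi> i) r"
    using act_smult[OF u(1)] by simp
  have "vge v (act (\<Psi> i) r) (v x + int (p ^ (n - i)) * b i + 1)"
  proof (cases "r = 0")
    case False
    then have "v x + 1 \<le> v r"
      using u(4) unfolding r_def vge_def by auto
    then show ?thesis
      using vge_mono[OF scaffold_Psi_vge[OF sc i False]] by simp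
  qed (simp add: act_zero_right)
  then show thesis
    using that u split by blast
qed

lemma scaffold_Psi_valuation:
  assumes sc: "scaffold v K act p n b \<Psi> lam T" and i: "i \<in> {1..n}" and x: "x \<noteq> 0"
  shows "1 \<le> digit p (afun p n b (v x)) (n - i) \<Longrightarrow>
      act (\<Psi> i) x \<noteq> 0 \<and> v (act (\<Psi> i) x) = v x + int (p ^ (n - i)) * b i"
    and "digit p (afun p n b (v x)) (n - i) = 0 \<Longrightarrow>
      vge v (act (\<Psi> i) x) (v x + int (p ^ (n - i)) * b i + 1)"
proof -
  let ?sh = "int (p ^ (n - i)) * b i"
  obtain u e where u: "u \<in> K" "u \<noteq> 0" "v u = 0"
    and split: "act (\<Psi> i) x = u * act (\<Psi> i) (lam (v x)) + e" and e: "vge v e (v x + ?sh + 1)"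
    using scaffold_Psi_split[OF sc i x] by blast
  show "act (\<Psi> i) x \<noteq> 0 \<and> v (act (\<Psi> i) x) = v x + ?sh"
    if "1 \<le> digit p (afun p n b (v x)) (n - i)"
  proof -
    have "u * act (\<Psi> i) (lam (v x)) \<noteq> 0" "v (u * act (\<Psi> i) (lam (v x))) = v x + ?sh"
      using scaffold_lambda_valuation(1)[OF sc i that] u v_mult by auto
    then show ?thesis
      using v_add_dominant e split by simp
  qed
  show "vge v (act (\<Psi> i) x) (v x + ?sh + 1)" if "digit p (afun p n b (v x)) (n - i) = 0"
  proof -
    have "vge v (u * act (\<Psi> i) (lam (v x))) (v x + ?sh + 1)"
      using vge_mult[OF scaffold_lambda_valuation(2)[OF sc i that] u(2)] u(3) by simp
    then show ?thesis
      using vge_add e split by simp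
  qed
qed

lemma scaffold_Psi_power_vge:
  assumes sc: "scaffold v K act p n b \<Psi> lam T" and i: "i \<in> {1..n}"
  shows "x \<noteq> 0 \<Longrightarrow> vge v (act (\<Psi> i ^ j) x)
    (v x + int j * (int (p ^ (n - i)) * b i) + (if digit p (afun p n b (v x)) (n - i) < j then 1 else 0))"
proof (induction j arbitrary: x)
  case 0
  then show ?case by (simp add: act_one vge_self)
next
  case (Suc j)
  let ?sh = "int (p ^ (n - i)) * b i"
  let ?y = "act (\<Psi> i) x"
  let ?d = "digit p (afun p n b (v x)) (n - i)"
  have power: "act (\<Psi> i ^ Suc j) x = act (\<Psi> i ^ j) ?y"
    by (simp only: power_Suc2 act_mult)
  show ?case
  proof (cases "?d = 0")
    case True
    then have y: "vge v ?y (v x + ?sh + 1)"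
      using scaffold_Psi_valuation(2)[OF sc i Suc.prems] by simp
    show ?thesis
    proof (cases "?y = 0")
      case False
      then have "v x + ?sh + 1 \<le> v ?y"
        using y by (simp add: vge_def)
      then have "v x + int (Suc j) * ?sh + 1 \<le>
          v ?y + int j * ?sh + (if digit p (afun p n b (v ?y)) (n - i) < j then 1 else 0)"
        by (simp add: algebra_simps)
      then show ?thesis
        unfolding power using vge_mono[OF Suc.IH[OF False]] True by simp
    qed (unfold power, simp add: act_zero_right)
  next
    case False
    then have y: "?y \<noteq> 0" "v ?y = v x + ?sh"
      using scaffold_Psi_valuation(1)[OF sc i Suc.prems] by auto
    have "digit p (afun p n b (v ?y)) (n - i) = ?d - 1"
      using digit_afun_shift[OF i, of "v x"] False y(2) i by auto
    moreover have "?d - 1 < j \<longleftrightarrow> ?d < Suc j"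
      using False by auto
    ultimately show ?thesis
      unfolding power using Suc.IH[OF y(1)] y(2) by (simp add: algebra_simps)
  qed
qed

lemma scaffold_C3:
  assumes sc: "scaffold v K act p n b \<Psi> lam T"
  shows "C3 v p n b act \<Psi>"
  unfolding C3_def
proof (intro ballI allI impI)
  fix i \<alpha> assume i: "i \<in> {1..n}" and \<alpha>: "(\<alpha> :: 'l) \<noteq> 0"
  have "digit p (afun p n b (v \<alpha>)) (n - i) < p"
    using digit_less p_gt_1 by simp
  with scaffold_Psi_power_vge[OF sc i \<alpha>, of p]
  have "vge v (act (\<Psi> i ^ p) \<alpha>) (v \<alpha> + int p * (int (p ^ (n - i)) * b i) + 1)"
    by simp
  then show "vge v (act (\<Psi> i ^ p) \<alpha>) (v \<alpha> + b i * int (p ^ (n - i + 1)) + 1)"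
    by (simp add: ac_simps)
qed

text \<open>Applying a word to \<open>x\<close> letter by letter, each letter \<open>i\<close> lowers the digit \<open>(n - i)\<close> of
  \<open>\<a>(v x)\<close> by one, so as long as the word has at most that many letters \<open>i\<close> every step is exact.\<close>

lemma scaffold_word_valuation:
  assumes sc: "scaffold v K act p n b \<Psi> lam T" and x: "x \<noteq> 0"
  shows "set w \<subseteq> {1..n} \<Longrightarrow> \<forall>i\<in>{1..n}. count_list w i \<le> digit p (afun p n b (v x)) (n - i) \<Longrightarrow>
    act (Psi_word w) x \<noteq> 0 \<and>
    v (act (Psi_word w) x) = v x + (\<Sum>i\<in>{1..n}. int (count_list w i) * (int (p ^ (n - i)) * b i)) \<and>
    (\<forall>i\<in>{1..n}. digit p (afun p n b (v (act (Psi_word w) x))) (n - i) =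
      digit p (afun p n b (v x)) (n - i) - count_list w i)"
proof (induction w)
  case Nil
  then show ?case using x by (simp add: act_one Psi_word_def)
next
  case (Cons a w)
  let ?D = "\<lambda>i. digit p (afun p n b (v x)) (n - i)"
  let ?y = "act (Psi_word w) x"
  let ?sum = "\<lambda>w. \<Sum>i\<in>{1..n}. int (count_list w i) * (int (p ^ (n - i)) * b i)"
  have a: "a \<in> {1..n}" and w: "set w \<subseteq> {1..n}"
    using Cons.prems(1) by auto
  have "count_list w i \<le> ?D i" if "i \<in> {1..n}" for i
    using Cons.prems(2)[rule_format, OF that] by (simp split: if_splits)
  then have "\<forall>i\<in>{1..n}. count_list w i \<le> ?D i"
    by blast
  note IH = Cons.IH[OF w this]
  have y: "?y \<noteq> 0" "v ?y = v x + ?sum w"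
    and dy: "\<forall>i\<in>{1..n}. digit p (afun p n b (v ?y)) (n - i) = ?D i - count_list w i"
    using IH by blast+
  have "count_list w a + 1 \<le> ?D a"
    using Cons.prems(2)[rule_format, OF a] by simp
  then have d1: "1 \<le> digit p (afun p n b (v ?y)) (n - a)"
    using dy a by simp
  have z: "act (\<Psi> a) ?y \<noteq> 0" "v (act (\<Psi> a) ?y) = v ?y + int (p ^ (n - a)) * b a"
    using scaffold_Psi_valuation(1)[OF sc a y(1) d1] by blast+
  have sum: "?sum (a # w) = ?sum w + int (p ^ (n - a)) * b a"
    using sum_count_list_Cons[OF _ a] by simp
  have "digit p (afun p n b (v (act (\<Psi> a) ?y))) (n - i) = ?D i - count_list (a # w) i"
    if i: "i \<in> {1..n}" for i
  proof -
    have "n - i < n" "n - i = n - a \<longleftrightarrow> i = a"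
      using i a by auto
    then have "digit p (afun p n b (v (act (\<Psi> a) ?y))) (n - i) =
        (if i = a then digit p (afun p n b (v ?y)) (n - a) - 1 else digit p (afun p n b (v ?y)) (n - i))"
      using digit_afun_shift[OF a d1] z(2) by simp
    then show ?thesis
      using dy i by auto
  qed
  moreover have "act (Psi_word (a # w)) x = act (\<Psi> a) ?y"
    by (simp add: Psi_word_Cons act_mult)
  ultimately show ?case
    using z y sum by simp
qed

lemma scaffold_C2:
  assumes sc: "scaffold v K act p n b \<Psi> lam T"
    and \<rho>: "\<rho> \<noteq> 0" and top: "afun p n b (v \<rho>) = p ^ n - 1"
  shows "C2 v p n b act \<Psi> \<rho>"
  unfolding C2_def
proof (intro allI impI ballI)
  fix s \<Phi> assume s: "s < p ^ n" and "\<Phi> \<in> Upsilon p n \<Psi> s"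
  then obtain w where w: "\<Phi> = Psi_word w" "set w \<subseteq> {1..n}"
    and count: "\<forall>i\<in>{1..n}. count_list w i = digit p s (n - i)"
    unfolding Upsilon_def Psi_word_def by blast
  have "count_list w i \<le> digit p (afun p n b (v \<rho>)) (n - i)" if i: "i \<in> {1..n}" for i
  proof -
    have "digit p s (n - i) < p" "digit p (afun p n b (v \<rho>)) (n - i) = p - 1"
      using digit_less digit_top[OF p_gt_1] top p_gt_1 i by auto
    then show ?thesis
      using count i by simp
  qed
  moreover have "(\<Sum>i\<in>{1..n}. int (count_list w i) * (int (p ^ (n - i)) * b i)) = bfun p n b s"
    unfolding bfun_def using count by (simp add: mult.assoc)
  ultimately show "act \<Phi> \<rho> \<noteq> 0 \<and> v (act \<Phi> \<rho>) = v \<rho> + bfun p n b s"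
    using scaffold_word_valuation[OF sc \<rho> w(2)] w(1) by auto
qed

theorem conditions_of_scaffold:
  assumes sc: "scaffold v K act p n b \<Psi> lam T"
  shows "C1 n act \<Psi>" and "C3 v p n b act \<Psi>"
    and "\<rho> \<noteq> 0 \<Longrightarrow> afun p n b (v \<rho>) = p ^ n - 1 \<Longrightarrow> C2 v p n b act \<Psi> \<rho>"
  using sc scaffold_C3[OF sc] scaffold_C2[OF sc] unfolding scaffold_def C1_def by blast+

end

theorem theoremA1:
  fixes v :: "'l::field \<Rightarrow> int" and K :: "'l set" and p n :: nat
    and \<iota> :: "'l \<Rightarrow> 'a::ring_1" and act :: "'a \<Rightarrow> 'l \<Rightarrow> 'l"
    and b :: "nat \<Rightarrow> int" and \<Psi> :: "nat \<Rightarrow> 'a"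
  assumes field: "totally_ramified_local v K p n"
    and alg: "K_algebra_acting K \<iota> act (p ^ n)"
    and shifts: "\<forall>i\<in>{1..n}. \<not> int p dvd b i"
  shows
    "(\<forall>lam \<rho>. lambda_family v K p n lam \<and> C1 n act \<Psi> \<and> C3 v p n b act \<Psi> \<and>
        \<rho> \<noteq> 0 \<and> C2 v p n b act \<Psi> \<rho> \<longrightarrow>
        scaffold v K act p n b \<Psi> lam 1 \<and> afun p n b (v \<rho>) = p ^ n - 1)
     \<and> (\<forall>\<rho>. C1 n act \<Psi> \<and> C3 v p n b act \<Psi> \<and> \<rho> \<noteq> 0 \<and> C2 v p n b act \<Psi> \<rho> \<and>
        C4 p n \<Psi> \<and> (\<forall>x y :: 'a. x * y = y * x) \<longrightarrow>
        (\<exists>lam. scaffold v K act p n b \<Psi> lam \<infinity>))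
     \<and> (\<forall>lam T. scaffold v K act p n b \<Psi> lam T \<longrightarrow>
        C1 n act \<Psi> \<and> C3 v p n b act \<Psi> \<and>
        (\<forall>\<rho>. \<rho> \<noteq> 0 \<and> afun p n b (v \<rho>) = p ^ n - 1 \<longrightarrow> C2 v p n b act \<Psi> \<rho>))"
proof -
  interpret scaffold_setting v K p n b \<iota> act \<Psi>
    using field alg shifts by unfold_locales (auto simp: totally_ramified_local_def)
  show ?thesis
    using scaffold_of_conditions afun_top_of_conditions exact_scaffold_of_conditions
      conditions_of_scaffold by blast
qed

end
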